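(* Let $L\in\mathcal{L}$ be such that $L$ and its Banach dual $L^*$ have order continuous norms. Let $t\ge 1$ and let $A, A_1,\dots,A_m$ be nonnegative matrices that define operators on $L$. Then $$\gamma(A^{(t)})\le\gamma(A)^t,\qquad \rho_{ess}(A^{(t)})\le\rho_{ess}(A)^t,$$ $$\gamma(A_1^{(t)}\cdots A_m^{(t)})\le\gamma(A_1\cdots A_m)^t,\qquad \rho_{ess}(A_1^{(t)}\cdots A_m^{(t)})\le\rho_{ess}(A_1\cdots A_m)^t.$$
   Context: Let $R=\mathbb{N}$ or $R=\{1,\dots,N\}$. A Banach sequence space is a Banach space $L$ of complex sequences indexed by $R$ such that if $x$ is a complex sequence, $y\in L$ and $|x|\le|y|$ entrywise, then $x\in L$ and $\|x\|_L\le\|y\|_L$. $\mathcal{L}$ is the class of Banach sequence spaces containing every standard unit vector $e_n$ with $\|e_n\|_L=1$. A Banach lattice has order continuous norm if every decreasing net $0\le f_\alpha\downarrow 0$ satisfies $\|f_\alpha\|\to0$ (e.g. $\ell^p$, $1<p<\infty$, and $c_0$ together with their duals satisfy the hypothesis). A nonnegative matrix $A=[a_{ij}]_{i,j\in R}$ defines an operator on $L$ if for every $x\in L$ the sums $(Ax)_i=\sum_{j}a_{ij}x_j$ converge absolutely and $Ax\in L$; it is then a bounded positive operator on $L$. For $t>0$, the Hadamard power is $A^{(t)}=[a_{ij}^t]$ (it is known that for $t\ge1$ it again defines an operator on $L$). For a bounded operator $T$ on $L$, $\gamma(T)$ is the Hausdorff measure of noncompactness: $\gamma(T)=\inf\{\delta>0:\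 T(D_L)\subseteq M+\delta D_L \text{ for some finite } M\subset L\}$, where $D_L$ is the closed unit ball of $L$; $\rho_{ess}(T)$ is the essential spectral radius, i.e. the spectral radius of the image of $T$ in the Calkin algebra $B(L)/K(L)$; equivalently $\rho_{ess}(T)=\lim_{j\to\infty}\gamma(T^j)^{1/j}$. *)

theory Defs
  imports "HOL-Analysis.Analysis"
begin

type_synonym cseq = "nat \<Rightarrow> complex"

definition index_set :: "nat set \<Rightarrow> bool" where
  "index_set R \<longleftrightarrow> R = UNIV \<or> (\<exists>N::nat. N \<ge> 1 \<and> R = {1..N})"

definition banach_seq_space :: "nat set \<Rightarrow> cseq set \<Rightarrow> (cseq \<Rightarrow> real) \<Rightarrow> bool" where
  "banach_seq_space R S nrm \<longleftrightarrow>
     index_set R \<and>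
     (\<forall>x\<in>S. \<forall>i. i \<notin> R \<longrightarrow> x i = 0) \<and>
     (\<lambda>i. 0) \<in> S \<and>
     (\<forall>x\<in>S. \<forall>y\<in>S. (\<lambda>i. x i + y i) \<in> S) \<and>
     (\<forall>x\<in>S. \<forall>c::complex. (\<lambda>i. c * x i) \<in> S) \<and>
     (\<forall>x\<in>S. 0 \<le> nrm x) \<and>
     (\<forall>x\<in>S. nrm x = 0 \<longleftrightarrow> x = (\<lambda>i. 0)) \<and>
     (\<forall>x\<in>S. \<forall>c::complex. nrm (\<lambda>i. c * x i) = cmod c * nrm x) \<and>
     (\<forall>x\<in>S. \<forall>y\<in>S. nrm (\<lambda>i. x i + y i) \<le> nrm x + nrm y) \<and>
     \<comment> \<open>completeness\<close>
     (\<forall>X::nat \<Rightarrow> cseq. (\<forall>n. X n \<in> S) \<and>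
        (\<forall>e>0. \<exists>M. \<forall>m\<ge>M. \<forall>n\<ge>M. nrm (\<lambda>i. X m i - X n i) < e) \<longrightarrow>
        (\<exists>x\<in>S. \<forall>e>0. \<exists>M. \<forall>n\<ge>M. nrm (\<lambda>i. X n i - x i) < e)) \<and>
     \<comment> \<open>lattice ideal property\<close>
     (\<forall>x y. y \<in> S \<and> (\<forall>i. cmod (x i) \<le> cmod (y i)) \<longrightarrow> x \<in> S \<and> nrm x \<le> nrm y)"

definition unit_vec :: "nat \<Rightarrow> cseq" where
  "unit_vec n = (\<lambda>i. if i = n then 1 else 0)"

definition in_class_L :: "nat set \<Rightarrow> cseq set \<Rightarrow> (cseq \<Rightarrow> real) \<Rightarrow> bool" where
  "in_class_L R S nrm \<longleftrightarrow> banach_seq_space R S nrm \<and>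
     (\<forall>n\<in>R. unit_vec n \<in> S \<and> nrm (unit_vec n) = 1)"

definition nonneg_seq :: "cseq \<Rightarrow> bool" where
  "nonneg_seq f \<longleftrightarrow> (\<forall>i. f i \<in> \<real> \<and> 0 \<le> Re (f i))"

definition real_seq :: "cseq \<Rightarrow> bool" where
  "real_seq f \<longleftrightarrow> (\<forall>i. f i \<in> \<real>)"

text \<open>Order continuity: every decreasing net \<open>0 \<le> f\<^sub>\<alpha> \<down> 0\<close> has norms tending to 0.
  A decreasing net is represented by its range, a nonempty downward directed set D of
  positive elements; its norms decrease, so they tend to 0 iff their infimum is 0.\<close>
definition order_continuous_seq :: "cseq set \<Rightarrow> (cseq \<Rightarrow> real) \<Rightarrow> bool" where
  "order_continuous_seq S nrm \<longleftrightarrow>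
     (\<forall>D. D \<subseteq> S \<and> D \<noteq> {} \<and> (\<forall>f\<in>D. nonneg_seq f) \<and>
          (\<forall>f\<in>D. \<forall>g\<in>D. \<exists>h\<in>D. \<forall>i. Re (h i) \<le> Re (f i) \<and> Re (h i) \<le> Re (g i)) \<and>
          (\<forall>h\<in>S. real_seq h \<and> (\<forall>f\<in>D. \<forall>i. Re (h i) \<le> Re (f i)) \<longrightarrow> (\<forall>i. Re (h i) \<le> 0))
        \<longrightarrow> (INF f\<in>D. nrm f) = 0)"

definition dual_space :: "cseq set \<Rightarrow> (cseq \<Rightarrow> real) \<Rightarrow> (cseq \<Rightarrow> complex) set" where
  "dual_space S nrm = {\<phi>.
     (\<forall>x. x \<notin> S \<longrightarrow> \<phi> x = 0) \<and>
     (\<forall>x\<in>S. \<forall>y\<in>S. \<phi> (\<lambda>i. x i + y i) = \<phi> x + \<phi> y) \<and>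
     (\<forall>x\<in>S. \<forall>c. \<phi> (\<lambda>i. c * x i) = c * \<phi> x) \<and>
     (\<exists>C. \<forall>x\<in>S. cmod (\<phi> x) \<le> C * nrm x)}"

definition dual_norm :: "cseq set \<Rightarrow> (cseq \<Rightarrow> real) \<Rightarrow> (cseq \<Rightarrow> complex) \<Rightarrow> real" where
  "dual_norm S nrm \<phi> = (SUP x\<in>{x\<in>S. nrm x \<le> 1}. cmod (\<phi> x))"

definition dual_positive :: "cseq set \<Rightarrow> (cseq \<Rightarrow> complex) \<Rightarrow> bool" where
  "dual_positive S \<phi> \<longleftrightarrow> (\<forall>x\<in>S. nonneg_seq x \<longrightarrow> \<phi> x \<in> \<real> \<and> 0 \<le> Re (\<phi> x))"

definition dual_real :: "cseq set \<Rightarrow> (cseq \<Rightarrow> complex) \<Rightarrow> bool" where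
  "dual_real S \<phi> \<longleftrightarrow> (\<forall>x\<in>S. real_seq x \<longrightarrow> \<phi> x \<in> \<real>)"

definition order_continuous_dual :: "cseq set \<Rightarrow> (cseq \<Rightarrow> real) \<Rightarrow> bool" where
  "order_continuous_dual S nrm \<longleftrightarrow>
     (\<forall>D. D \<subseteq> dual_space S nrm \<and> D \<noteq> {} \<and> (\<forall>\<phi>\<in>D. dual_positive S \<phi>) \<and>
          (\<forall>\<phi>\<in>D. \<forall>\<psi>\<in>D. \<exists>\<eta>\<in>D. \<forall>x\<in>S. nonneg_seq x \<longrightarrow>
               Re (\<eta> x) \<le> Re (\<phi> x) \<and> Re (\<eta> x) \<le> Re (\<psi> x)) \<and>
          (\<forall>\<eta>\<in>dual_space S nrm. dual_real S \<eta> \<and>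
               (\<forall>\<phi>\<in>D. \<forall>x\<in>S. nonneg_seq x \<longrightarrow> Re (\<eta> x) \<le> Re (\<phi> x))
             \<longrightarrow> (\<forall>x\<in>S. nonneg_seq x \<longrightarrow> Re (\<eta> x) \<le> 0))
        \<longrightarrow> (INF \<phi>\<in>D. dual_norm S nrm \<phi>) = 0)"

definition nonneg_matrix :: "nat set \<Rightarrow> (nat \<Rightarrow> nat \<Rightarrow> real) \<Rightarrow> bool" where
  "nonneg_matrix R A \<longleftrightarrow> (\<forall>i\<in>R. \<forall>j\<in>R. 0 \<le> A i j)"

definition mat_op :: "nat set \<Rightarrow> (nat \<Rightarrow> nat \<Rightarrow> real) \<Rightarrow> cseq \<Rightarrow> cseq" where
  "mat_op R A x = (\<lambda>i. if i \<in> R then (\<Sum>\<^sub>\<infinity>j\<in>R. complex_of_real (A i j) * x j) else 0)"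

definition defines_operator :: "nat set \<Rightarrow> cseq set \<Rightarrow> (nat \<Rightarrow> nat \<Rightarrow> real) \<Rightarrow> bool" where
  "defines_operator R S A \<longleftrightarrow>
     (\<forall>x\<in>S. (\<forall>i\<in>R. (\<lambda>j. norm (complex_of_real (A i j) * x j)) summable_on R) \<and>
            mat_op R A x \<in> S)"

definition hadamard_pow :: "(nat \<Rightarrow> nat \<Rightarrow> real) \<Rightarrow> real \<Rightarrow> (nat \<Rightarrow> nat \<Rightarrow> real)" where
  "hadamard_pow A t = (\<lambda>i j. A i j powr t)"

definition prod_op :: "nat set \<Rightarrow> (nat \<Rightarrow> nat \<Rightarrow> real) list \<Rightarrow> cseq \<Rightarrow> cseq" where
  "prod_op R As = foldr (\<lambda>A T. mat_op R A \<circ> T) As id"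

definition unit_ball :: "cseq set \<Rightarrow> (cseq \<Rightarrow> real) \<Rightarrow> cseq set" where
  "unit_ball S nrm = {x\<in>S. nrm x \<le> 1}"

definition hmnc :: "cseq set \<Rightarrow> (cseq \<Rightarrow> real) \<Rightarrow> (cseq \<Rightarrow> cseq) \<Rightarrow> real" where
  "hmnc S nrm T = Inf {\<delta>. \<delta> > 0 \<and> (\<exists>M. finite M \<and> M \<subseteq> S \<and>
       T ` unit_ball S nrm \<subseteq> {(\<lambda>i. m i + complex_of_real \<delta> * y i) | m y. m \<in> M \<and> y \<in> unit_ball S nrm})}"

definition ess_spec_rad :: "cseq set \<Rightarrow> (cseq \<Rightarrow> real) \<Rightarrow> (cseq \<Rightarrow> cseq) \<Rightarrow> real" where
  "ess_spec_rad S nrm T = lim (\<lambda>j. root j (hmnc S nrm (T ^^ j)))"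

end

(* Write B = A_1^(t) ... A_m^(t) and C = A_1 ... A_m. For nonnegative numbers and t >= 1,
   sum_k a_k^t <= (sum_k a_k)^t; applied factor by factor, every matrix entry of B is at most
   the t-th power of the corresponding entry of C.
   Let gamma(C) < d. By order continuity of L the tails (the coordinates i >= n) of a finite
   net are small for large n, so the tails of C(ball) have norm at most d. In particular the
   entries of C in the rows i >= n are at most d, hence there the entries of B are at most
   d^(t-1) times those of C, and the tails of B(ball) have norm at most d^(t-1) d = d^t. The
   heads (coordinates i < n) of B(ball) form a bounded subset of a finite dimensional space,
   so gamma(B) <= d^t. The powers B^j and C^j are products of the same kind, which gives the
   inequality for rho_ess after taking j-th roots; the limit defining rho_ess exists by
   Fekete's lemma, since gamma is submultiplicative. *)

theory Submission
  imports Defs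
begin

lemma powr_le_powr_minus_one_mult:
  fixes a K t :: real
  assumes "0 \<le> a" "a \<le> K" "1 \<le> t"
  shows "a powr t \<le> K powr (t - 1) * a"
proof (cases "a = 0")
  case False
  then have "a powr t = a powr (t - 1) * a"
    using assms(1) powr_add[of a "t - 1" 1] by simp
  also have "\<dots> \<le> K powr (t - 1) * a"
    using assms False by (intro mult_right_mono powr_mono2) auto
  finally show ?thesis .
qed (use assms in simp)

lemma member_le_infsum:
  fixes f :: "'a \<Rightarrow> real"
  assumes "f summable_on A" "\<And>x. x \<in> A \<Longrightarrow> 0 \<le> f x" "x \<in> A"
  shows "f x \<le> (\<Sum>\<^sub>\<infinity>y\<in>A. f y)"
  using infsum_mono_neutral[of f "{x}" f A] assms by simp

lemma infsum_powr_le: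
  fixes f :: "'a \<Rightarrow> real"
  assumes f: "f summable_on A" "\<And>x. x \<in> A \<Longrightarrow> 0 \<le> f x" and t: "t \<ge> 1"
  shows "(\<lambda>x. f x powr t) summable_on A"
    and "(\<Sum>\<^sub>\<infinity>x\<in>A. f x powr t) \<le> (\<Sum>\<^sub>\<infinity>x\<in>A. f x) powr t"
proof -
  define K where "K = (\<Sum>\<^sub>\<infinity>x\<in>A. f x)"
  have K: "K \<ge> 0"
    unfolding K_def using f(2) by (rule infsum_nonneg)
  \<comment> \<open>Every term is at most the total, so its t-th power is at most K powr (t - 1) times the term.\<close>
  have le: "f x powr t \<le> K powr (t - 1) * f x" if "x \<in> A" for x
    using powr_le_powr_minus_one_mult[OF f(2)[OF that] member_le_infsum[OF f that] t] by (simp add: K_def)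
  show summable: "(\<lambda>x. f x powr t) summable_on A"
    by (rule summable_on_comparison_test[OF summable_on_cmult_right[OF f(1)] le]) simp_all
  have "(\<Sum>\<^sub>\<infinity>x\<in>A. f x powr t) \<le> (\<Sum>\<^sub>\<infinity>x\<in>A. K powr (t - 1) * f x)"
    by (rule infsum_mono[OF summable summable_on_cmult_right[OF f(1)] le])
  also have "\<dots> = K powr (t - 1) * K"
    by (simp add: K_def infsum_cmult_right[OF f(1)])
  also have "\<dots> = K powr t"
    using K t powr_add[of K "t - 1" 1] by (cases "K = 0") auto
  finally show "(\<Sum>\<^sub>\<infinity>x\<in>A. f x powr t) \<le> (\<Sum>\<^sub>\<infinity>x\<in>A. f x) powr t"
    by (simp add: K_def)
qed

lemma le_powr_if_forall_gt:
  fixes a g t :: real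
  assumes "g \<ge> 0" "t > 0" "\<And>d. d > g \<Longrightarrow> a \<le> d powr t"
  shows "a \<le> g powr t"
proof -
  have "((\<lambda>d. d powr t) \<longlongrightarrow> g powr t) (at_right g)"
    using assms(1,2) by (intro tendsto_powr' tendsto_ident_at tendsto_const)
      (auto intro: eventually_mono[OF eventually_at_right_less])
  then show ?thesis
    by (rule tendsto_lowerbound) (auto intro: eventually_mono[OF eventually_at_right_less] assms(3))
qed

lemma submultiplicative_power_le:
  fixes h :: "nat \<Rightarrow> real"
  assumes nonneg: "\<And>n. 0 \<le> h n" and submult: "\<And>m n. h (m + n) \<le> h m * h n"
  shows "h (q * k + r) \<le> h k ^ q * h r"
proof (induction q)
  case (Suc q)
  have "h (Suc q * k + r) \<le> h k * h (q * k + r)"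
    using submult[of k "q * k + r"] by (simp add: add.assoc)
  also have "\<dots> \<le> h k * (h k ^ q * h r)"
    using Suc nonneg by (intro mult_left_mono) auto
  finally show ?case
    by (simp add: mult.assoc)
qed simp

lemma submultiplicative_le_geometric:
  fixes h :: "nat \<Rightarrow> real"
  assumes nonneg: "\<And>n. 0 \<le> h n" and submult: "\<And>m n. h (m + n) \<le> h m * h n"
    and "k \<ge> 1" "c > 0" "h k \<le> c ^ k"
  obtains H where "H > 0" "\<And>n. h n \<le> c ^ n * H"
proof -
  define B where "B = Max (insert 1 (h ` {..<k}))"
  have B: "1 \<le> B" "\<And>r. r < k \<Longrightarrow> h r \<le> B"
    by (auto simp: B_def intro!: Max_ge)
  define H where "H = B * max 1 (1 / c) ^ k"
  have "h n \<le> c ^ n * H" for n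
  proof -
    define q r where "q = n div k" and "r = n mod k"
    have n: "n = q * k + r" and "r < k"
      using \<open>k \<ge> 1\<close> by (simp_all add: q_def r_def)
    have "h n \<le> h k ^ q * h r"
      unfolding n by (rule submultiplicative_power_le[OF nonneg submult])
    also have "\<dots> \<le> (c ^ k) ^ q * B"
      using \<open>h k \<le> c ^ k\<close> B(2)[OF \<open>r < k\<close>] nonneg \<open>c > 0\<close> by (intro mult_mono power_mono) auto
    also have "(c ^ k) ^ q = c ^ n * (1 / c) ^ r"
      using \<open>c > 0\<close> by (simp add: n power_add power_mult mult.commute power_one_over)
    also have "c ^ n * (1 / c) ^ r * B \<le> c ^ n * H"
    proof -
      have "(1 / c) ^ r \<le> max 1 (1 / c) ^ r"
        using \<open>c > 0\<close> by (intro power_mono) auto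
      also have "\<dots> \<le> max 1 (1 / c) ^ k"
        using \<open>r < k\<close> by (intro power_increasing) auto
      finally show ?thesis
        using \<open>c > 0\<close> B(1) by (simp add: H_def mult.assoc mult_left_mono mult.commute[of B])
    qed
    finally show ?thesis .
  qed
  moreover have "H > 0"
    using B(1) by (simp add: H_def)
  ultimately show ?thesis
    using that by blast
qed

lemma submultiplicative_root_convergent:
  fixes h :: "nat \<Rightarrow> real"
  assumes nonneg: "\<And>n. 0 \<le> h n" and submult: "\<And>m n. h (m + n) \<le> h m * h n"
  shows "convergent (\<lambda>n. root n (h n))"
proof -
  define a where "a n = root n (h n)" for n
  have a_nonneg: "a n \<ge> 0" for n
    unfolding a_def by (rule real_root_ge_zero[OF nonneg])
  define l where "l = Inf (a ` {1..})"
  have l_le: "l \<le> a n" if "n \<ge> 1" for n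
    unfolding l_def using that a_nonneg by (intro cInf_lower bdd_belowI[of _ 0]) auto
  have "l \<ge> 0"
    unfolding l_def by (rule cInf_greatest) (use a_nonneg in auto)
  have "a \<longlonglongrightarrow> l"
  proof (rule LIMSEQ_I)
    fix e :: real assume "e > 0"
    obtain k where k: "k \<ge> 1" "a k < l + e / 2"
      using cInf_lessD[of "a ` {1..}" "l + e / 2"] \<open>e > 0\<close> unfolding l_def[symmetric] by auto
    define c where "c = l + e / 2"
    have "c > 0"
      using \<open>l \<ge> 0\<close> \<open>e > 0\<close> by (simp add: c_def)
    have "h k \<le> c ^ k"
      using real_root_pow_pos2[of k "h k"] power_mono[of "a k" c k] k a_nonneg nonneg
      by (simp add: a_def c_def)
    then obtain H where "H > 0" and hn: "\<And>n. h n \<le> c ^ n * H"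
      using submultiplicative_le_geometric[OF nonneg submult k(1) \<open>c > 0\<close>] by blast
    have a_le: "a n \<le> c * root n H" if "n \<ge> 1" for n
    proof -
      have "a n \<le> root n (c ^ n * H)"
        unfolding a_def using that hn by (intro real_root_le_mono) auto
      also have "\<dots> = c * root n H"
        using that \<open>c > 0\<close> by (simp add: real_root_mult real_root_power_cancel)
      finally show ?thesis .
    qed
    have "(\<lambda>n. c * root n H) \<longlonglongrightarrow> c * 1"
      by (intro tendsto_mult tendsto_const LIMSEQ_root_const \<open>H > 0\<close>)
    moreover have "c * 1 < l + e"
      using \<open>e > 0\<close> by (simp add: c_def)
    ultimately have "eventually (\<lambda>n. c * root n H < l + e) sequentially"
      by (rule order_tendstoD(2))
    then obtain N where N: "\<forall>n\<ge>N. c * root n H < l + e"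
      unfolding eventually_sequentially by blast
    have "\<bar>a n - l\<bar> < e" if "n \<ge> max N 1" for n
      using a_le[of n] l_le[of n] N that \<open>e > 0\<close> by fastforce
    then show "\<exists>N. \<forall>n\<ge>N. norm (a n - l) < e"
      unfolding real_norm_def by blast
  qed
  then show ?thesis
    unfolding a_def convergent_def by blast
qed

lemma prod_op_Nil: "prod_op R [] = id"
  and prod_op_Cons: "prod_op R (A # As) = mat_op R A \<circ> prod_op R As"
  by (simp_all add: prod_op_def)

lemma prod_op_append: "prod_op R (As @ Bs) = prod_op R As \<circ> prod_op R Bs"
  by (induction As) (simp_all add: prod_op_Nil prod_op_Cons comp_assoc)

lemma prod_op_funpow: "prod_op R As ^^ j = prod_op R (concat (replicate j As))"
  by (induction j) (simp_all add: prod_op_Nil prod_op_append)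

section \<open>Banach sequence spaces in the class \<open>\<L>\<close>\<close>

locale class_L_space =
  fixes R :: "nat set" and S :: "cseq set" and nrm :: "cseq \<Rightarrow> real"
  assumes in_class_L: "in_class_L R S nrm"
begin

lemma is_banach_seq_space: "banach_seq_space R S nrm"
  using in_class_L by (simp add: in_class_L_def)

lemma vanishes_outside: "x \<in> S \<Longrightarrow> i \<notin> R \<Longrightarrow> x i = 0"
  and zero_mem: "(\<lambda>i. 0) \<in> S"
  and add_mem: "x \<in> S \<Longrightarrow> y \<in> S \<Longrightarrow> (\<lambda>i. x i + y i) \<in> S"
  and scale_mem: "x \<in> S \<Longrightarrow> (\<lambda>i. c * x i) \<in> S"
  and nrm_nonneg: "x \<in> S \<Longrightarrow> 0 \<le> nrm x"
  and nrm_eq_0_iff: "x \<in> S \<Longrightarrow> nrm x = 0 \<longleftrightarrow> x = (\<lambda>i. 0)"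
  and nrm_scale: "x \<in> S \<Longrightarrow> nrm (\<lambda>i. c * x i) = cmod c * nrm x"
  and nrm_triangle: "x \<in> S \<Longrightarrow> y \<in> S \<Longrightarrow> nrm (\<lambda>i. x i + y i) \<le> nrm x + nrm y"
  using is_banach_seq_space by (simp_all add: banach_seq_space_def)

lemma lattice_ideal: "y \<in> S \<Longrightarrow> (\<And>i. cmod (x i) \<le> cmod (y i)) \<Longrightarrow> x \<in> S \<and> nrm x \<le> nrm y"
proof -
  have "\<forall>x y. y \<in> S \<and> (\<forall>i. cmod (x i) \<le> cmod (y i)) \<longrightarrow> x \<in> S \<and> nrm x \<le> nrm y"
    using is_banach_seq_space by (simp add: banach_seq_space_def)
  then show "y \<in> S \<Longrightarrow> (\<And>i. cmod (x i) \<le> cmod (y i)) \<Longrightarrow> x \<in> S \<and> nrm x \<le> nrm y"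
    by blast
qed

lemma ideal_mem: "y \<in> S \<Longrightarrow> (\<And>i. cmod (x i) \<le> cmod (y i)) \<Longrightarrow> x \<in> S"
  and nrm_mono: "y \<in> S \<Longrightarrow> (\<And>i. cmod (x i) \<le> cmod (y i)) \<Longrightarrow> nrm x \<le> nrm y"
  by (simp_all add: lattice_ideal)

lemma complete:
  fixes X :: "nat \<Rightarrow> cseq"
  assumes "\<And>n. X n \<in> S" and "\<And>e. e > 0 \<Longrightarrow> \<exists>M. \<forall>m\<ge>M. \<forall>n\<ge>M. nrm (\<lambda>i. X m i - X n i) < e"
  shows "\<exists>x\<in>S. \<forall>e>0. \<exists>M. \<forall>n\<ge>M. nrm (\<lambda>i. X n i - x i) < e"
proof -
  have "\<forall>X :: nat \<Rightarrow> cseq. (\<forall>n. X n \<in> S) \<and> (\<forall>e>0. \<exists>M. \<forall>m\<ge>M. \<forall>n\<ge>M. nrm (\<lambda>i. X m i - X n i) < e) \<longrightarrow>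
          (\<exists>x\<in>S. \<forall>e>0. \<exists>M. \<forall>n\<ge>M. nrm (\<lambda>i. X n i - x i) < e)"
    using is_banach_seq_space unfolding banach_seq_space_def by (elim conjE) assumption
  with assms show ?thesis by blast
qed

lemma unit_vec_mem: "n \<in> R \<Longrightarrow> unit_vec n \<in> S"
  and nrm_unit_vec: "n \<in> R \<Longrightarrow> nrm (unit_vec n) = 1"
  using in_class_L by (simp_all add: in_class_L_def)

lemma nrm_zero: "nrm (\<lambda>i. 0) = 0"
  using nrm_eq_0_iff zero_mem by blast

lemma diff_mem: "x \<in> S \<Longrightarrow> y \<in> S \<Longrightarrow> (\<lambda>i. x i - y i) \<in> S"
  using add_mem[of x "\<lambda>i. -1 * y i"] scale_mem[of y "-1"] by simp

lemma nrm_cong_cmod: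
  assumes "x \<in> S" and "\<And>i. cmod (y i) = cmod (x i)" shows "nrm y = nrm x"
proof -
  have "y \<in> S" using ideal_mem[OF assms(1)] assms(2) by simp
  then show ?thesis using nrm_mono[OF assms(1), of y] nrm_mono[of y x] assms(2) by simp
qed

lemma nrm_minus_commute: "x \<in> S \<Longrightarrow> y \<in> S \<Longrightarrow> nrm (\<lambda>i. x i - y i) = nrm (\<lambda>i. y i - x i)"
  by (rule nrm_cong_cmod[OF diff_mem]) (simp_all add: norm_minus_commute)

lemma sum_mem: "finite K \<Longrightarrow> (\<And>k. k \<in> K \<Longrightarrow> f k \<in> S) \<Longrightarrow> (\<lambda>i. \<Sum>k\<in>K. f k i) \<in> S"
  by (induction K rule: finite_induct) (simp_all add: zero_mem add_mem)

lemma nrm_sum_le: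
  "finite K \<Longrightarrow> (\<And>k. k \<in> K \<Longrightarrow> f k \<in> S) \<Longrightarrow> nrm (\<lambda>i. \<Sum>k\<in>K. f k i) \<le> (\<Sum>k\<in>K. nrm (f k))"
proof (induction K rule: finite_induct)
  case (insert a K)
  then have "nrm (\<lambda>i. f a i + (\<Sum>k\<in>K. f k i)) \<le> nrm (f a) + nrm (\<lambda>i. \<Sum>k\<in>K. f k i)"
    by (intro nrm_triangle sum_mem) auto
  with insert show ?case by simp
qed (simp add: nrm_zero)

lemma cmod_le_nrm:
  assumes "x \<in> S" shows "cmod (x i) \<le> nrm x"
proof (cases "i \<in> R")
  case True
  have "cmod (x i) = nrm (\<lambda>k. x i * unit_vec i k)"
    using nrm_scale[OF unit_vec_mem[OF True]] nrm_unit_vec[OF True] by simp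
  also have "\<dots> \<le> nrm x"
    by (rule nrm_mono[OF assms]) (auto simp: unit_vec_def)
  finally show ?thesis .
qed (simp add: vanishes_outside[OF assms] nrm_nonneg[OF assms])

definition abs_seq :: "cseq \<Rightarrow> cseq" where
  "abs_seq x = (\<lambda>i. complex_of_real (cmod (x i)))"

lemma abs_seq_mem: "x \<in> S \<Longrightarrow> abs_seq x \<in> S"
  by (rule ideal_mem[of x]) (simp_all add: abs_seq_def)

lemma nrm_abs_seq: "x \<in> S \<Longrightarrow> nrm (abs_seq x) = nrm x"
  by (rule nrm_cong_cmod) (simp_all add: abs_seq_def)

definition seq_head :: "nat \<Rightarrow> cseq \<Rightarrow> cseq" where
  "seq_head n x = (\<lambda>i. if i < n then x i else 0)"

definition seq_tail :: "nat \<Rightarrow> cseq \<Rightarrow> cseq" where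
  "seq_tail n x = (\<lambda>i. if n \<le> i then x i else 0)"

lemma seq_head_mem: "x \<in> S \<Longrightarrow> seq_head n x \<in> S"
  by (rule ideal_mem[of x]) (simp_all add: seq_head_def)

lemma seq_tail_mem: "x \<in> S \<Longrightarrow> seq_tail n x \<in> S"
  by (rule ideal_mem[of x]) (simp_all add: seq_tail_def)

lemma nrm_seq_tail_le: "x \<in> S \<Longrightarrow> nrm (seq_tail n x) \<le> nrm x"
  by (rule nrm_mono[of x]) (simp_all add: seq_tail_def)

lemma seq_head_plus_tail: "(\<lambda>i. seq_head n x i + seq_tail n x i) = x"
  by (auto simp: seq_head_def seq_tail_def)

lemma seq_head_eq_sum:
  assumes "x \<in> S"
  shows "seq_head n x = (\<lambda>i. \<Sum>k\<in>{..<n} \<inter> R. x k * unit_vec k i)"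
proof
  fix i
  show "seq_head n x i = (\<Sum>k\<in>{..<n} \<inter> R. x k * unit_vec k i)"
  proof (cases "i \<in> {..<n} \<inter> R")
    case True
    then have "(\<Sum>k\<in>{..<n} \<inter> R. x k * unit_vec k i) = (\<Sum>k\<in>{i}. x k * unit_vec k i)"
      by (intro sum.mono_neutral_right) (auto simp: unit_vec_def)
    with True show ?thesis by (simp add: seq_head_def unit_vec_def)
  next
    case False
    then show ?thesis
      using vanishes_outside[OF assms] by (auto simp: seq_head_def unit_vec_def intro!: sum.neutral)
  qed
qed

lemma partial_sums_Cauchy:
  fixes u :: "nat \<Rightarrow> cseq"
  assumes u: "\<And>k. u k \<in> S" and summable: "summable (\<lambda>k. nrm (u k))" and "e > 0"
  shows "\<exists>M. \<forall>m\<ge>M. \<forall>n\<ge>M. nrm (\<lambda>i. (\<Sum>k<m. u k i) - (\<Sum>k<n. u k i)) < e"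
proof -
  obtain M where M: "\<forall>n\<ge>M. \<forall>m. norm (\<Sum>k\<in>{n..<m}. nrm (u k)) < e"
    using summable_Cauchy[THEN iffD1, OF summable] \<open>e > 0\<close> by blast
  have close: "nrm (\<lambda>i. (\<Sum>k<m. u k i) - (\<Sum>k<n. u k i)) < e" if "n \<ge> M" "n \<le> m" for m n
  proof -
    have "(\<Sum>k<m. u k i) = (\<Sum>k<n. u k i) + (\<Sum>k\<in>{n..<m}. u k i)" for i
      using that(2) by (simp add: lessThan_atLeast0 sum.atLeastLessThan_concat)
    then have "nrm (\<lambda>i. (\<Sum>k<m. u k i) - (\<Sum>k<n. u k i)) \<le> (\<Sum>k\<in>{n..<m}. nrm (u k))"
      using nrm_sum_le[of "{n..<m}" u] u by simp
    moreover have "\<bar>\<Sum>k\<in>{n..<m}. nrm (u k)\<bar> < e"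
      using M that(1) by (metis real_norm_def)
    ultimately show ?thesis
      by linarith
  qed
  show ?thesis
  proof (intro exI allI impI)
    fix m n assume "m \<ge> M" "n \<ge> M"
    moreover have "nrm (\<lambda>i. (\<Sum>k<m. u k i) - (\<Sum>k<n. u k i)) = nrm (\<lambda>i. (\<Sum>k<n. u k i) - (\<Sum>k<m. u k i))"
      using u by (intro nrm_minus_commute sum_mem) auto
    ultimately show "nrm (\<lambda>i. (\<Sum>k<m. u k i) - (\<Sum>k<n. u k i)) < e"
      using close[of n m] close[of m n] by (cases "n \<le> m") auto
  qed
qed

lemma summable_series_converges:
  fixes u :: "nat \<Rightarrow> cseq"
  assumes u: "\<And>k. u k \<in> S" and summable: "summable (\<lambda>k. nrm (u k))"
  obtains z where "z \<in> S" "\<And>i. (\<lambda>n. \<Sum>k<n. u k i) \<longlonglongrightarrow> z i"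
proof -
  define s where "s n = (\<lambda>i. \<Sum>k<n. u k i)" for n
  have s: "s n \<in> S" for n
    unfolding s_def by (intro sum_mem) (simp_all add: u)
  have "\<exists>M. \<forall>m\<ge>M. \<forall>n\<ge>M. nrm (\<lambda>i. s m i - s n i) < e" if "e > 0" for e
    unfolding s_def by (rule partial_sums_Cauchy[OF u summable that])
  from complete[OF s this] obtain z
    where z: "z \<in> S" "\<And>e. e > 0 \<Longrightarrow> \<exists>M. \<forall>n\<ge>M. nrm (\<lambda>i. s n i - z i) < e"
    by blast
  have "(\<lambda>n. s n i) \<longlonglongrightarrow> z i" for i
  proof (rule LIMSEQ_I)
    fix e :: real assume "e > 0"
    then obtain M where "\<forall>n\<ge>M. nrm (\<lambda>i. s n i - z i) < e"
      using z(2) by blast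
    then show "\<exists>M. \<forall>n\<ge>M. norm (s n i - z i) < e"
      using cmod_le_nrm[OF diff_mem[OF s z(1)]] order.strict_trans1 by blast
  qed
  then show ?thesis
    using that z(1) by (simp add: s_def)
qed

lemma majorant_of_summable_nonneg_series:
  assumes u: "\<And>k. u k \<in> S" "\<And>k. nonneg_seq (u k)" and summable: "summable (\<lambda>k. nrm (u k))"
  obtains z where "z \<in> S" "\<And>k i. cmod (u k i) \<le> cmod (z i)"
proof -
  obtain z where z: "z \<in> S" "\<And>i. (\<lambda>n. \<Sum>k<n. u k i) \<longlonglongrightarrow> z i"
    using summable_series_converges[OF u(1) summable] by blast
  have Re_u: "cmod (u k i) = Re (u k i)" "0 \<le> Re (u k i)" for k i
    using u(2)[of k] by (auto simp: nonneg_seq_def complex_is_Real_iff cmod_eq_Re)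
  have "cmod (u k i) \<le> cmod (z i)" for k i
  proof -
    have "Re (u k i) \<le> Re (\<Sum>j<n. u j i)" if "n \<ge> Suc k" for n
      using that Re_u(2) by (auto simp: Re_sum intro!: member_le_sum)
    then have "Re (u k i) \<le> Re (z i)"
      by (intro LIMSEQ_le_const[OF tendsto_Re[OF z(2)]]) blast
    then show ?thesis
      using Re_u(1)[of k i] complex_Re_le_cmod[of "z i"] by linarith
  qed
  then show ?thesis
    using that z(1) by blast
qed

definition bounded_op :: "(cseq \<Rightarrow> cseq) \<Rightarrow> bool" where
  "bounded_op T \<longleftrightarrow> (\<forall>x\<in>S. T x \<in> S) \<and>
     (\<forall>x\<in>S. \<forall>y\<in>S. T (\<lambda>i. x i + y i) = (\<lambda>i. T x i + T y i)) \<and>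
     (\<forall>x\<in>S. \<forall>c. T (\<lambda>i. c * x i) = (\<lambda>i. c * T x i)) \<and>
     (\<exists>K. \<forall>x\<in>S. nrm (T x) \<le> K * nrm x)"

lemma bounded_op_mem: "bounded_op T \<Longrightarrow> x \<in> S \<Longrightarrow> T x \<in> S"
  and bounded_op_add: "bounded_op T \<Longrightarrow> x \<in> S \<Longrightarrow> y \<in> S \<Longrightarrow> T (\<lambda>i. x i + y i) = (\<lambda>i. T x i + T y i)"
  and bounded_op_scale: "bounded_op T \<Longrightarrow> x \<in> S \<Longrightarrow> T (\<lambda>i. c * x i) = (\<lambda>i. c * T x i)"
  unfolding bounded_op_def by blast+

lemma bounded_op_image_subset: "bounded_op T \<Longrightarrow> T ` S \<subseteq> S"
  by (auto simp: bounded_op_mem)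

lemma bounded_opE:
  assumes "bounded_op T"
  obtains K where "K \<ge> 0" "\<And>x. x \<in> S \<Longrightarrow> nrm (T x) \<le> K * nrm x"
proof -
  obtain K where K: "\<forall>x\<in>S. nrm (T x) \<le> K * nrm x"
    using assms unfolding bounded_op_def by blast
  have "nrm (T x) \<le> max K 0 * nrm x" if "x \<in> S" for x
    using K that mult_right_mono[OF max.cobounded1 nrm_nonneg[OF that]] by (blast intro: order_trans)
  then show ?thesis
    by (intro that[of "max K 0"]) auto
qed

lemma bounded_op_sum:
  assumes "bounded_op T"
  shows "finite K \<Longrightarrow> (\<And>k. k \<in> K \<Longrightarrow> f k \<in> S) \<Longrightarrow>
    T (\<lambda>i. \<Sum>k\<in>K. f k i) = (\<lambda>i. \<Sum>k\<in>K. T (f k) i)"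
proof (induction K rule: finite_induct)
  case empty
  show ?case using bounded_op_scale[OF assms zero_mem, of 0] by simp
next
  case (insert a K)
  then show ?case
    using bounded_op_add[OF assms, of "f a" "\<lambda>i. \<Sum>k\<in>K. f k i"] sum_mem[OF insert.hyps(1)] by simp
qed

lemma bounded_op_comp:
  assumes "bounded_op T" "bounded_op U"
  shows "bounded_op (T \<circ> U)"
proof -
  obtain K1 where K1: "K1 \<ge> 0" "\<And>x. x \<in> S \<Longrightarrow> nrm (T x) \<le> K1 * nrm x"
    using bounded_opE[OF assms(1)] by blast
  obtain K2 where K2: "\<And>x. x \<in> S \<Longrightarrow> nrm (U x) \<le> K2 * nrm x"
    using bounded_opE[OF assms(2)] by blast
  have "nrm (T (U x)) \<le> (K1 * K2) * nrm x" if "x \<in> S" for x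
    using K1(2)[OF bounded_op_mem[OF assms(2) that]] mult_left_mono[OF K2[OF that] K1(1)] by simp
  then show ?thesis
    using assms unfolding bounded_op_def comp_def by (intro conjI exI[of _ "K1 * K2"]) auto
qed

lemma bounded_op_id: "bounded_op id"
  unfolding bounded_op_def by (intro conjI exI[of _ 1]) simp_all

lemma bounded_op_funpow: "bounded_op T \<Longrightarrow> bounded_op (T ^^ n)"
  by (induction n) (simp_all add: bounded_op_id bounded_op_comp)

subsection \<open>Finite nets and the Hausdorff measure of noncompactness\<close>

definition has_finite_net :: "cseq set \<Rightarrow> real \<Rightarrow> bool" where
  "has_finite_net X \<eta> \<longleftrightarrow> (\<exists>M. finite M \<and> M \<subseteq> S \<and> (\<forall>x\<in>X. \<exists>m\<in>M. nrm (\<lambda>i. x i - m i) \<le> \<eta>))"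

lemma has_finite_net_mono:
  "has_finite_net Y \<eta> \<Longrightarrow> X \<subseteq> Y \<Longrightarrow> \<eta> \<le> \<eta>' \<Longrightarrow> has_finite_net X \<eta>'"
  unfolding has_finite_net_def by (meson order_trans subsetD)

lemma unit_ball_decompose:
  assumes "x \<in> S" "m \<in> S" "\<delta> > 0" "nrm (\<lambda>i. x i - m i) \<le> \<delta>"
  obtains y where "y \<in> unit_ball S nrm" "x = (\<lambda>i. m i + complex_of_real \<delta> * y i)"
proof
  define y where "y = (\<lambda>i. complex_of_real (1 / \<delta>) * (x i - m i))"
  have diff: "(\<lambda>i. x i - m i) \<in> S"
    by (rule diff_mem[OF assms(1,2)])
  have "nrm y = cmod (complex_of_real (1 / \<delta>)) * nrm (\<lambda>i. x i - m i)"
    unfolding y_def by (rule nrm_scale[OF diff])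
  also have "\<dots> \<le> 1"
    using assms(3,4) by (simp add: norm_divide)
  finally have "nrm y \<le> 1" .
  moreover have "y \<in> S"
    unfolding y_def by (rule scale_mem[OF diff])
  ultimately show "y \<in> unit_ball S nrm"
    by (simp add: unit_ball_def)
  show "x = (\<lambda>i. m i + complex_of_real \<delta> * y i)"
    using assms(3) by (simp add: y_def)
qed

lemma cover_iff_net:
  assumes "X \<subseteq> S" "M \<subseteq> S" "\<delta> > 0"
  shows "X \<subseteq> {(\<lambda>i. m i + complex_of_real \<delta> * y i) | m y. m \<in> M \<and> y \<in> unit_ball S nrm}
     \<longleftrightarrow> (\<forall>x\<in>X. \<exists>m\<in>M. nrm (\<lambda>i. x i - m i) \<le> \<delta>)"
    (is "X \<subseteq> ?cover \<longleftrightarrow> ?net")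
proof
  assume cover: "X \<subseteq> ?cover"
  show ?net
  proof
    fix x assume "x \<in> X"
    then obtain m y where my: "m \<in> M" "y \<in> S" "nrm y \<le> 1" "x = (\<lambda>i. m i + complex_of_real \<delta> * y i)"
      using cover by (auto simp: unit_ball_def)
    then have "nrm (\<lambda>i. x i - m i) = \<delta> * nrm y"
      using nrm_scale[of y "complex_of_real \<delta>"] \<open>\<delta> > 0\<close> by simp
    also have "\<dots> \<le> \<delta>"
      using my(3) \<open>\<delta> > 0\<close> by (simp add: mult_left_le)
    finally show "\<exists>m\<in>M. nrm (\<lambda>i. x i - m i) \<le> \<delta>"
      using my(1) by blast
  qed
next
  assume net: ?net
  show "X \<subseteq> ?cover"
  proof
    fix x assume "x \<in> X"
    then obtain m where m: "m \<in> M" "nrm (\<lambda>i. x i - m i) \<le> \<delta>"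
      using net by blast
    obtain y where "y \<in> unit_ball S nrm" "x = (\<lambda>i. m i + complex_of_real \<delta> * y i)"
      by (rule unit_ball_decompose[of x m]) (use assms \<open>x \<in> X\<close> m in auto)
    then show "x \<in> ?cover"
      using m(1) by blast
  qed
qed

lemma hmnc_eq_Inf_nets:
  assumes "T ` S \<subseteq> S"
  shows "hmnc S nrm T = Inf {\<delta>. \<delta> > 0 \<and> has_finite_net (T ` unit_ball S nrm) \<delta>}"
proof -
  have ball: "T ` unit_ball S nrm \<subseteq> S"
    using assms by (auto simp: unit_ball_def)
  have "(\<exists>M. finite M \<and> M \<subseteq> S \<and>
       T ` unit_ball S nrm \<subseteq> {(\<lambda>i. m i + complex_of_real \<delta> * y i) | m y. m \<in> M \<and> y \<in> unit_ball S nrm})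
      \<longleftrightarrow> has_finite_net (T ` unit_ball S nrm) \<delta>" if "\<delta> > 0" for \<delta>
    unfolding has_finite_net_def
    by (intro ex_cong1 conj_cong refl) (rule cover_iff_net[OF ball _ that])
  then show ?thesis
    unfolding hmnc_def by (simp cong: conj_cong)
qed

lemma hmnc_le_of_net:
  assumes "T ` S \<subseteq> S" "\<delta> > 0" "has_finite_net (T ` unit_ball S nrm) \<delta>"
  shows "hmnc S nrm T \<le> \<delta>"
  unfolding hmnc_eq_Inf_nets[OF assms(1)]
  by (rule cInf_lower) (use assms(2,3) in \<open>auto intro: bdd_belowI[of _ 0]\<close>)

lemma hmnc_nets_nonempty:
  assumes "bounded_op T"
  shows "{\<delta>. \<delta> > 0 \<and> has_finite_net (T ` unit_ball S nrm) \<delta>} \<noteq> {}"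
proof -
  obtain K where K: "K \<ge> 0" "\<And>x. x \<in> S \<Longrightarrow> nrm (T x) \<le> K * nrm x"
    using bounded_opE[OF assms] by blast
  have "nrm (T x) \<le> K + 1" if "x \<in> unit_ball S nrm" for x
    using K(2)[of x] mult_left_le[of "nrm x" K] K(1) that by (auto simp: unit_ball_def)
  then have "has_finite_net (T ` unit_ball S nrm) (K + 1)"
    unfolding has_finite_net_def using zero_mem by (intro exI[of _ "{\<lambda>i. 0}"]) auto
  then show ?thesis
    using K(1) by (intro ex_in_conv[THEN iffD1] exI[of _ "K + 1"]) auto
qed

lemma hmnc_nonneg: "bounded_op T \<Longrightarrow> 0 \<le> hmnc S nrm T"
  unfolding hmnc_eq_Inf_nets[OF bounded_op_image_subset]
  by (rule cInf_greatest[OF hmnc_nets_nonempty]) auto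

lemma has_finite_net_of_hmnc_less:
  assumes "bounded_op T" "hmnc S nrm T < \<delta>"
  shows "has_finite_net (T ` unit_ball S nrm) \<delta>"
proof -
  have "Inf {\<delta>. \<delta> > 0 \<and> has_finite_net (T ` unit_ball S nrm) \<delta>} < \<delta>"
    using assms(2) hmnc_eq_Inf_nets[OF bounded_op_image_subset[OF assms(1)]] by simp
  then obtain \<delta>' where "has_finite_net (T ` unit_ball S nrm) \<delta>'" "\<delta>' < \<delta>"
    using cInf_lessD[OF hmnc_nets_nonempty[OF assms(1)]] by blast
  then show ?thesis
    using has_finite_net_mono by fastforce
qed

lemma has_finite_net_comp:
  assumes U: "bounded_op U" and V: "bounded_op V" and "d2 > 0"
    and net1: "has_finite_net (U ` unit_ball S nrm) d1"
    and net2: "has_finite_net (V ` unit_ball S nrm) d2"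
  shows "has_finite_net ((U \<circ> V) ` unit_ball S nrm) (d1 * d2)"
proof -
  obtain M1 where M1: "finite M1" "M1 \<subseteq> S"
    "\<And>x. x \<in> unit_ball S nrm \<Longrightarrow> \<exists>m\<in>M1. nrm (\<lambda>i. U x i - m i) \<le> d1"
    using net1 unfolding has_finite_net_def by blast
  obtain M2 where M2: "finite M2" "M2 \<subseteq> S"
    "\<And>x. x \<in> unit_ball S nrm \<Longrightarrow> \<exists>m\<in>M2. nrm (\<lambda>i. V x i - m i) \<le> d2"
    using net2 unfolding has_finite_net_def by blast
  define M where "M = (\<lambda>(m1, m2) i. U m2 i + complex_of_real d2 * m1 i) ` (M1 \<times> M2)"
  have M: "finite M" "M \<subseteq> S"
    using M1 M2 by (auto simp: M_def intro!: add_mem scale_mem bounded_op_mem[OF U])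
  have near: "\<exists>m\<in>M. nrm (\<lambda>i. U (V x) i - m i) \<le> d1 * d2" if x: "x \<in> unit_ball S nrm" for x
  proof -
    obtain m2 where m2: "m2 \<in> M2" "nrm (\<lambda>i. V x i - m2 i) \<le> d2"
      using M2(3)[OF x] by blast
    have m2S: "m2 \<in> S" and VxS: "V x \<in> S"
      using m2 M2 x bounded_op_mem[OF V] by (auto simp: unit_ball_def)
    obtain y where y: "y \<in> unit_ball S nrm" "V x = (\<lambda>i. m2 i + complex_of_real d2 * y i)"
      by (rule unit_ball_decompose[OF VxS m2S \<open>d2 > 0\<close> m2(2)])
    have yS: "y \<in> S"
      using y(1) by (simp add: unit_ball_def)
    obtain m1 where m1: "m1 \<in> M1" "nrm (\<lambda>i. U y i - m1 i) \<le> d1"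
      using M1(3)[OF y(1)] by blast
    have m1S: "m1 \<in> S" and UyS: "U y \<in> S"
      using m1 M1 bounded_op_mem[OF U yS] by auto
    have "U (V x) = (\<lambda>i. U m2 i + complex_of_real d2 * U y i)"
      using y(2) bounded_op_add[OF U m2S scale_mem[OF yS]] bounded_op_scale[OF U yS] by simp
    then have "(\<lambda>i. U (V x) i - (U m2 i + complex_of_real d2 * m1 i))
        = (\<lambda>i. complex_of_real d2 * (U y i - m1 i))"
      by (simp add: algebra_simps)
    then have "nrm (\<lambda>i. U (V x) i - (U m2 i + complex_of_real d2 * m1 i)) = d2 * nrm (\<lambda>i. U y i - m1 i)"
      using nrm_scale[OF diff_mem[OF UyS m1S]] \<open>d2 > 0\<close> by simp
    also have "\<dots> \<le> d1 * d2"
      using m1(2) \<open>d2 > 0\<close> by (simp add: mult.commute)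
    finally have close: "nrm (\<lambda>i. U (V x) i - (U m2 i + complex_of_real d2 * m1 i)) \<le> d1 * d2" .
    have "(\<lambda>i. U m2 i + complex_of_real d2 * m1 i) \<in> M"
      unfolding M_def using m1(1) m2(1) by (auto intro!: image_eqI[where x = "(m1, m2)"])
    with close show ?thesis
      by (rule bexI)
  qed
  show ?thesis
    unfolding has_finite_net_def
  proof (intro exI[of _ M] conjI ballI M)
    fix z assume "z \<in> (U \<circ> V) ` unit_ball S nrm"
    then obtain x where "x \<in> unit_ball S nrm" "z = U (V x)"
      by auto
    then show "\<exists>m\<in>M. nrm (\<lambda>i. z i - m i) \<le> d1 * d2"
      using near by blast
  qed
qed

lemma hmnc_comp_le:
  assumes U: "bounded_op U" and V: "bounded_op V"
  shows "hmnc S nrm (U \<circ> V) \<le> hmnc S nrm U * hmnc S nrm V"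
proof -
  let ?a = "hmnc S nrm U" and ?b = "hmnc S nrm V"
  have "hmnc S nrm (U \<circ> V) \<le> (?a + s) * (?b + s)" if "s > 0" for s
  proof (rule hmnc_le_of_net)
    show "(?a + s) * (?b + s) > 0"
      using that hmnc_nonneg[OF U] hmnc_nonneg[OF V] by simp
    show "has_finite_net ((U \<circ> V) ` unit_ball S nrm) ((?a + s) * (?b + s))"
      using that hmnc_nonneg[OF V]
      by (intro has_finite_net_comp U V has_finite_net_of_hmnc_less) auto
  qed (use bounded_op_mem[OF bounded_op_comp[OF U V]] in auto)
  moreover have "((\<lambda>s. (?a + s) * (?b + s)) \<longlongrightarrow> (?a + 0) * (?b + 0)) (at_right 0)"
    by (intro tendsto_intros)
  ultimately show ?thesis
    by (intro tendsto_lowerbound[where F = "at_right 0"])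
       (auto simp: eventually_at_right_less eventually_mono[OF eventually_at_right_less])
qed

lemma has_finite_net_add:
  assumes "has_finite_net X e1" "X \<subseteq> S" "has_finite_net Y e2" "Y \<subseteq> S"
  shows "has_finite_net {(\<lambda>i. x i + y i) | x y. x \<in> X \<and> y \<in> Y} (e1 + e2)"
proof -
  obtain M1 where M1: "finite M1" "M1 \<subseteq> S" "\<forall>x\<in>X. \<exists>m\<in>M1. nrm (\<lambda>i. x i - m i) \<le> e1"
    using assms(1) unfolding has_finite_net_def by blast
  obtain M2 where M2: "finite M2" "M2 \<subseteq> S" "\<forall>y\<in>Y. \<exists>m\<in>M2. nrm (\<lambda>i. y i - m i) \<le> e2"
    using assms(3) unfolding has_finite_net_def by blast
  define M where "M = (\<lambda>(a, b) i. a i + b i) ` (M1 \<times> M2)"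
  have MS: "M \<subseteq> S"
  proof
    fix z assume "z \<in> M"
    then obtain a b where "a \<in> M1" "b \<in> M2" "z = (\<lambda>i. a i + b i)"
      by (auto simp: M_def)
    then show "z \<in> S"
      using M1(2) M2(2) add_mem by blast
  qed
  have Mfin: "finite M"
    unfolding M_def using M1(1) M2(1) by (intro finite_imageI finite_cartesian_product)
  have near: "\<exists>m\<in>M. nrm (\<lambda>i. z i - m i) \<le> e1 + e2"
    if z: "z \<in> {(\<lambda>i. x i + y i) | x y. x \<in> X \<and> y \<in> Y}" for z
  proof -
    obtain x y where xy: "x \<in> X" "y \<in> Y" "z = (\<lambda>i. x i + y i)"
      using z by blast
    obtain a b where ab: "a \<in> M1" "nrm (\<lambda>i. x i - a i) \<le> e1" "b \<in> M2" "nrm (\<lambda>i. y i - b i) \<le> e2"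
      using M1(3) M2(3) xy by blast
    have "x \<in> S" "y \<in> S" "a \<in> S" "b \<in> S"
      using xy ab assms(2,4) M1(2) M2(2) by auto
    then have "nrm (\<lambda>i. (x i - a i) + (y i - b i)) \<le> nrm (\<lambda>i. x i - a i) + nrm (\<lambda>i. y i - b i)"
      by (intro nrm_triangle diff_mem)
    moreover have "(\<lambda>i. z i - (a i + b i)) = (\<lambda>i. (x i - a i) + (y i - b i))"
      using xy(3) by (simp add: algebra_simps)
    ultimately have "nrm (\<lambda>i. z i - (a i + b i)) \<le> e1 + e2"
      using ab by simp
    moreover have "(\<lambda>i. a i + b i) \<in> M"
      unfolding M_def using ab by (auto intro!: image_eqI[where x = "(a, b)"])
    ultimately show ?thesis
      by (rule bexI)
  qed
  show ?thesis
    unfolding has_finite_net_def by (intro exI[of _ M] conjI ballI Mfin MS near)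
qed

lemma has_finite_net_scaled:
  assumes w: "w \<in> S" and "\<eta> > 0"
  shows "has_finite_net {(\<lambda>i. a * w i) | a. cmod a \<le> r} \<eta>"
proof -
  define e where "e = \<eta> / (nrm w + 1)"
  have e: "e > 0" "e * nrm w \<le> \<eta>"
    using \<open>\<eta> > 0\<close> nrm_nonneg[OF w] by (auto simp: e_def field_simps)
  have cover: "cball (0 :: complex) r \<subseteq> (\<Union>c\<in>cball 0 r. ball c e)"
  proof
    fix c :: complex assume "c \<in> cball 0 r"
    then show "c \<in> (\<Union>c\<in>cball 0 r. ball c e)"
      using e(1) by (intro UN_I[of c]) auto
  qed
  obtain G :: "complex set" where G: "G \<subseteq> cball 0 r" "finite G" "cball 0 r \<subseteq> (\<Union>c\<in>G. ball c e)"
    by (rule compactE_image[OF compact_cball _ cover]) simp_all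
  have "\<exists>g\<in>G. nrm (\<lambda>i. a * w i - g * w i) \<le> \<eta>" if a: "cmod a \<le> r" for a
  proof -
    obtain g where g: "g \<in> G" "cmod (a - g) < e"
      using G(3) a by (auto simp: dist_norm norm_minus_commute)
    have "(\<lambda>i. a * w i - g * w i) = (\<lambda>i. (a - g) * w i)"
      by (simp add: algebra_simps)
    then have "nrm (\<lambda>i. a * w i - g * w i) = cmod (a - g) * nrm w"
      using nrm_scale[OF w] by simp
    also have "\<dots> \<le> e * nrm w"
      using g(2) nrm_nonneg[OF w] by (simp add: mult_right_mono)
    finally show ?thesis
      using g(1) e(2) by force
  qed
  then show ?thesis
    unfolding has_finite_net_def using G(2) scale_mem[OF w]
    by (intro exI[of _ "(\<lambda>g i. g * w i) ` G"]) auto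
qed

lemma has_finite_net_combinations:
  "finite K \<Longrightarrow> (\<And>k. k \<in> K \<Longrightarrow> w k \<in> S) \<Longrightarrow> \<eta> > 0 \<Longrightarrow>
    has_finite_net {(\<lambda>i. \<Sum>k\<in>K. a k * w k i) | a. \<forall>k\<in>K. cmod (a k) \<le> r} \<eta>"
proof (induction K arbitrary: \<eta> rule: finite_induct)
  case empty
  show ?case
    unfolding has_finite_net_def using zero_mem nrm_zero empty.prems
    by (intro exI[of _ "{\<lambda>i. 0}"]) auto
next
  case (insert k K)
  let ?X = "{(\<lambda>i. a * w k i) | a. cmod a \<le> r}"
  let ?Y = "{(\<lambda>i. \<Sum>k\<in>K. a k * w k i) | a. \<forall>k\<in>K. cmod (a k) \<le> r}"
  have "has_finite_net {(\<lambda>i. x i + y i) | x y. x \<in> ?X \<and> y \<in> ?Y} (\<eta>/2 + \<eta>/2)"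
    using insert by (intro has_finite_net_add has_finite_net_scaled insert.IH)
      (auto intro!: scale_mem sum_mem)
  moreover have "{(\<lambda>i. \<Sum>k\<in>insert k K. a k * w k i) | a. \<forall>k\<in>insert k K. cmod (a k) \<le> r}
      \<subseteq> {(\<lambda>i. x i + y i) | x y. x \<in> ?X \<and> y \<in> ?Y}"
    using insert.hyps by fastforce
  ultimately show ?case
    by (auto intro: has_finite_net_mono)
qed

lemma has_finite_net_seq_heads:
  assumes B: "bounded_op B" and "\<eta> > 0"
  shows "has_finite_net ((\<lambda>x. seq_head n (B x)) ` unit_ball S nrm) \<eta>"
proof -
  obtain K where K: "K \<ge> 0" "\<And>x. x \<in> S \<Longrightarrow> nrm (B x) \<le> K * nrm x"
    using bounded_opE[OF B] by blast
  let ?H = "{(\<lambda>i. \<Sum>k\<in>{..<n} \<inter> R. a k * unit_vec k i) | a. \<forall>k\<in>{..<n} \<inter> R. cmod (a k) \<le> K}"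
  have net: "has_finite_net ?H \<eta>"
    by (rule has_finite_net_combinations) (use unit_vec_mem \<open>\<eta> > 0\<close> in auto)
  have "seq_head n (B x) \<in> ?H" if x: "x \<in> unit_ball S nrm" for x
  proof -
    have BxS: "B x \<in> S"
      using x bounded_op_mem[OF B] by (simp add: unit_ball_def)
    have "cmod (B x k) \<le> K" for k
      using cmod_le_nrm[OF BxS, of k] K(2)[of x] mult_left_le[of "nrm x" K] K(1) x
      by (auto simp: unit_ball_def)
    then show ?thesis
      unfolding seq_head_eq_sum[OF BxS] by blast
  qed
  then show ?thesis
    by (intro has_finite_net_mono[OF net _ order_refl]) auto
qed

lemma convergent_root_hmnc_funpow:
  assumes "bounded_op T"
  shows "convergent (\<lambda>j. root j (hmnc S nrm (T ^^ j)))"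
  using assms
  by (intro submultiplicative_root_convergent)
    (simp_all add: hmnc_nonneg bounded_op_funpow hmnc_comp_le funpow_add)

lemma ess_spec_rad_le_powr:
  assumes B: "bounded_op B" and C: "bounded_op C" and "t > 0"
    and le: "\<And>j. hmnc S nrm (B ^^ j) \<le> hmnc S nrm (C ^^ j) powr t"
  shows "ess_spec_rad S nrm B \<le> ess_spec_rad S nrm C powr t"
proof -
  define b where "b = (\<lambda>j. root j (hmnc S nrm (B ^^ j)))"
  define c where "c = (\<lambda>j. root j (hmnc S nrm (C ^^ j)))"
  have b: "b \<longlonglongrightarrow> ess_spec_rad S nrm B" and c: "c \<longlonglongrightarrow> ess_spec_rad S nrm C"
    using convergent_root_hmnc_funpow[OF B] convergent_root_hmnc_funpow[OF C]
    by (simp_all add: b_def c_def ess_spec_rad_def convergent_LIMSEQ_iff)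
  have c_nonneg: "c j \<ge> 0" for j
    unfolding c_def using real_root_ge_zero[OF hmnc_nonneg[OF bounded_op_funpow[OF C]]] by simp
  have "b j \<le> c j powr t" if "j > 0" for j
  proof -
    have "b j \<le> root j (hmnc S nrm (C ^^ j) powr t)"
      unfolding b_def using real_root_le_mono[OF that le] by simp
    also have "\<dots> = c j powr t"
      using that hmnc_nonneg[OF bounded_op_funpow[OF C]]
      by (simp add: c_def root_powr_inverse powr_powr mult.commute)
    finally show ?thesis .
  qed
  moreover have "(\<lambda>j. c j powr t) \<longlonglongrightarrow> ess_spec_rad S nrm C powr t"
    using c c_nonneg \<open>t > 0\<close> by (intro tendsto_powr') auto
  ultimately show ?thesis
    using b by (intro LIMSEQ_le[of b _ "\<lambda>j. c j powr t"]) (auto intro!: exI[of _ 1])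
qed

subsection \<open>Nonnegative matrices and their Hadamard powers\<close>

definition nonneg_op_matrix :: "(nat \<Rightarrow> nat \<Rightarrow> real) \<Rightarrow> bool" where
  "nonneg_op_matrix A \<longleftrightarrow> nonneg_matrix R A \<and> defines_operator R S A"

lemma nonneg_op_matrix_nonneg: "nonneg_op_matrix A \<Longrightarrow> i \<in> R \<Longrightarrow> j \<in> R \<Longrightarrow> 0 \<le> A i j"
  by (simp add: nonneg_op_matrix_def nonneg_matrix_def)

lemma mat_op_abs_summable:
  "nonneg_op_matrix A \<Longrightarrow> x \<in> S \<Longrightarrow> i \<in> R \<Longrightarrow> (\<lambda>j. norm (complex_of_real (A i j) * x j)) summable_on R"
  by (simp add: nonneg_op_matrix_def defines_operator_def)

lemma mat_op_summable:
  "nonneg_op_matrix A \<Longrightarrow> x \<in> S \<Longrightarrow> i \<in> R \<Longrightarrow> (\<lambda>j. complex_of_real (A i j) * x j) summable_on R"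
  by (rule abs_summable_summable[OF mat_op_abs_summable])

lemma mat_op_mem: "nonneg_op_matrix A \<Longrightarrow> x \<in> S \<Longrightarrow> mat_op R A x \<in> S"
  by (simp add: nonneg_op_matrix_def defines_operator_def)

lemma mat_op_zero: "mat_op R A (\<lambda>i. 0) = (\<lambda>i. 0)"
proof
  fix i
  have "(\<lambda>j. complex_of_real (A i j) * (0 :: complex)) = (\<lambda>j. 0)"
    by simp
  then show "mat_op R A (\<lambda>i. 0) i = 0"
    unfolding mat_op_def by simp
qed

lemma mat_op_add:
  assumes "nonneg_op_matrix A" "x \<in> S" "y \<in> S"
  shows "mat_op R A (\<lambda>i. x i + y i) = (\<lambda>i. mat_op R A x i + mat_op R A y i)"
  using infsum_add[OF mat_op_summable[OF assms(1,2)] mat_op_summable[OF assms(1,3)]]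
  by (auto simp: mat_op_def algebra_simps)

lemma mat_op_scale:
  assumes "nonneg_op_matrix A" "x \<in> S"
  shows "mat_op R A (\<lambda>i. c * x i) = (\<lambda>i. c * mat_op R A x i)"
  using infsum_cmult_right[where c = c, OF mat_op_summable[OF assms]]
  by (auto simp: mat_op_def algebra_simps)

lemma mat_op_unit_vec:
  assumes "i \<in> R" "j \<in> R"
  shows "mat_op R A (unit_vec j) i = complex_of_real (A i j)"
proof -
  have "(\<Sum>\<^sub>\<infinity>k\<in>R. complex_of_real (A i k) * unit_vec j k) = (\<Sum>\<^sub>\<infinity>k\<in>{j}. complex_of_real (A i k) * unit_vec j k)"
    by (rule infsum_cong_neutral) (use assms in \<open>auto simp: unit_vec_def\<close>)
  then show ?thesis
    using assms by (simp add: mat_op_def unit_vec_def)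
qed

lemma Re_mat_op:
  assumes A: "nonneg_op_matrix A" and x: "x \<in> S" and i: "i \<in> R"
  shows "Re (mat_op R A x i) = (\<Sum>\<^sub>\<infinity>j\<in>R. A i j * Re (x j))"
    and "(\<lambda>j. A i j * Re (x j)) summable_on R"
  using infsum_Re[OF mat_op_summable[OF A x i]] summable_on_Re[OF mat_op_summable[OF A x i]] i
  by (simp_all add: mat_op_def)

lemma Re_mat_op_abs_seq:
  assumes "nonneg_op_matrix A" "x \<in> S" "i \<in> R"
  shows "Re (mat_op R A (abs_seq x) i) = (\<Sum>\<^sub>\<infinity>j\<in>R. A i j * cmod (x j))"
    and "(\<lambda>j. A i j * cmod (x j)) summable_on R"
  using Re_mat_op[OF assms(1) abs_seq_mem[OF assms(2)] assms(3)] by (simp_all add: abs_seq_def)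

lemma Re_mat_op_nonneg:
  assumes "nonneg_op_matrix A" "x \<in> S" "i \<in> R" "\<And>k. k \<in> R \<Longrightarrow> 0 \<le> Re (x k)"
  shows "0 \<le> Re (mat_op R A x i)"
  unfolding Re_mat_op(1)[OF assms(1-3)]
  using assms nonneg_op_matrix_nonneg by (intro infsum_nonneg) simp

lemma cmod_mat_op_le:
  assumes A: "nonneg_op_matrix A" and x: "x \<in> S" and y: "y \<in> S"
    and le: "\<And>j. cmod (x j) \<le> cmod (y j)"
  shows "cmod (mat_op R A x i) \<le> cmod (mat_op R A (abs_seq y) i)"
proof (cases "i \<in> R")
  case True
  have "cmod (mat_op R A x i) \<le> (\<Sum>\<^sub>\<infinity>j\<in>R. cmod (complex_of_real (A i j) * x j))"
    using norm_infsum_bound[OF mat_op_abs_summable[OF A x True]] True by (simp add: mat_op_def)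
  also have "\<dots> = (\<Sum>\<^sub>\<infinity>j\<in>R. A i j * cmod (x j))"
    by (rule infsum_cong) (simp add: norm_mult nonneg_op_matrix_nonneg[OF A True])
  also have "\<dots> \<le> (\<Sum>\<^sub>\<infinity>j\<in>R. A i j * cmod (y j))"
    using le nonneg_op_matrix_nonneg[OF A True]
    by (intro infsum_mono Re_mat_op_abs_seq(2)[OF A x True] Re_mat_op_abs_seq(2)[OF A y True] mult_left_mono)
  also have "\<dots> = Re (mat_op R A (abs_seq y) i)"
    using Re_mat_op_abs_seq(1)[OF A y True] by simp
  also have "\<dots> \<le> cmod (mat_op R A (abs_seq y) i)"
    by (rule complex_Re_le_cmod)
  finally show ?thesis .
qed (simp add: mat_op_def)

lemma nrm_mat_op_le:
  assumes "nonneg_op_matrix A" "x \<in> S" "y \<in> S" "\<And>j. cmod (x j) \<le> cmod (y j)"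
  shows "nrm (mat_op R A x) \<le> nrm (mat_op R A (abs_seq y))"
  by (rule nrm_mono[OF mat_op_mem[OF assms(1) abs_seq_mem[OF assms(3)]] cmod_mat_op_le[OF assms]])

lemma mat_op_normalised_witness:
  assumes A: "nonneg_op_matrix A" and x: "x \<in> S" and big: "4 ^ k * nrm x < nrm (mat_op R A x)"
  obtains u where "u \<in> S" "nonneg_seq u" "nrm u = (1/2) ^ k" "2 ^ k < nrm (mat_op R A u)"
proof -
  have "nrm x > 0"
  proof (rule ccontr)
    assume "\<not> nrm x > 0"
    then have "x = (\<lambda>i. 0)"
      using nrm_nonneg[OF x] nrm_eq_0_iff[OF x] by simp
    then show False
      using big by (simp add: mat_op_zero nrm_zero)
  qed
  define c where "c = 1 / (2 ^ k * nrm x)"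
  define u where "u = (\<lambda>i. complex_of_real c * abs_seq x i)"
  have "c > 0"
    using \<open>nrm x > 0\<close> by (simp add: c_def)
  have "u \<in> S" "nonneg_seq u"
    using \<open>c > 0\<close> scale_mem[OF abs_seq_mem[OF x]] by (auto simp: u_def abs_seq_def nonneg_seq_def)
  moreover have "nrm u = (1/2) ^ k"
  proof -
    have "nrm u = cmod (complex_of_real c) * nrm (abs_seq x)"
      unfolding u_def by (rule nrm_scale[OF abs_seq_mem[OF x]])
    also have "\<dots> = c * nrm x"
      using \<open>c > 0\<close> nrm_abs_seq[OF x] by simp
    also have "\<dots> = (1/2) ^ k"
      using \<open>nrm x > 0\<close> by (simp add: c_def power_one_over)
    finally show ?thesis .
  qed
  moreover have "2 ^ k < nrm (mat_op R A u)"
  proof -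
    have "(4::real) ^ k = 2 ^ k * 2 ^ k"
      by (simp flip: power_mult_distrib)
    then have "(2::real) ^ k = c * (4 ^ k * nrm x)"
      using \<open>nrm x > 0\<close> by (simp add: c_def)
    also have "\<dots> < c * nrm (mat_op R A x)"
      using big \<open>c > 0\<close> by simp
    also have "\<dots> \<le> c * nrm (mat_op R A (abs_seq x))"
      using nrm_mat_op_le[OF A x x] \<open>c > 0\<close> by simp
    also have "\<dots> = cmod (complex_of_real c) * nrm (mat_op R A (abs_seq x))"
      using \<open>c > 0\<close> by simp
    also have "\<dots> = nrm (mat_op R A u)"
      unfolding u_def mat_op_scale[OF A abs_seq_mem[OF x]]
      by (rule nrm_scale[OF mat_op_mem[OF A abs_seq_mem[OF x]], symmetric])
    finally show ?thesis .
  qed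
  ultimately show ?thesis
    using that by blast
qed

lemma mat_op_bounded:
  assumes A: "nonneg_op_matrix A"
  shows "\<exists>K. \<forall>x\<in>S. nrm (mat_op R A x) \<le> K * nrm x"
proof (rule ccontr)
  assume "\<not> ?thesis"
  then have "\<exists>x\<in>S. 4 ^ k * nrm x < nrm (mat_op R A x)" for k :: nat
    by (meson not_le)
  then have "\<exists>u. u \<in> S \<and> nonneg_seq u \<and> nrm u = (1/2) ^ k \<and> 2 ^ k < nrm (mat_op R A u)" for k
    by (metis mat_op_normalised_witness[OF A])
  then obtain u where u: "\<And>k. u k \<in> S" "\<And>k. nonneg_seq (u k)" "\<And>k. nrm (u k) = (1/2) ^ k"
    and big: "\<And>k. 2 ^ k < nrm (mat_op R A (u k))"
    by metis
  \<comment> \<open>Gliding hump: the u k have a common majorant z, whose modulus bounds all their images.\<close>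
  have "summable (\<lambda>k. nrm (u k))"
    by (simp add: u(3))
  then obtain z where z: "z \<in> S" "\<And>k i. cmod (u k i) \<le> cmod (z i)"
    using majorant_of_summable_nonneg_series u(1,2) by blast
  obtain k where "nrm (mat_op R A (abs_seq z)) < 2 ^ k"
    using real_arch_pow[of 2] by auto
  moreover have "nrm (mat_op R A (u k)) \<le> nrm (mat_op R A (abs_seq z))"
    by (rule nrm_mat_op_le[OF A u(1) z(1) z(2)])
  ultimately show False
    using big[of k] by linarith
qed

lemma bounded_op_mat_op: "nonneg_op_matrix A \<Longrightarrow> bounded_op (mat_op R A)"
  unfolding bounded_op_def
  by (simp add: mat_op_mem mat_op_add mat_op_scale mat_op_bounded)

lemma nonneg_op_matrix_entries_bounded:
  assumes A: "nonneg_op_matrix A"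
  obtains K where "\<And>i j. i \<in> R \<Longrightarrow> j \<in> R \<Longrightarrow> A i j \<le> K"
proof -
  obtain K where K: "\<And>x. x \<in> S \<Longrightarrow> nrm (mat_op R A x) \<le> K * nrm x"
    using bounded_opE[OF bounded_op_mat_op[OF A]] by blast
  have "A i j \<le> K" if "i \<in> R" "j \<in> R" for i j
  proof -
    have "A i j \<le> cmod (mat_op R A (unit_vec j) i)"
      using mat_op_unit_vec[OF that] by simp
    also have "\<dots> \<le> nrm (mat_op R A (unit_vec j))"
      by (rule cmod_le_nrm[OF mat_op_mem[OF A unit_vec_mem[OF that(2)]]])
    also have "\<dots> \<le> K"
      using K[OF unit_vec_mem[OF that(2)]] nrm_unit_vec[OF that(2)] by simp
    finally show ?thesis .
  qed
  then show ?thesis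
    using that by blast
qed

lemma nonneg_op_matrix_le_scaled:
  assumes A: "nonneg_op_matrix A" and "c \<ge> 0"
    and B: "\<And>i j. i \<in> R \<Longrightarrow> j \<in> R \<Longrightarrow> 0 \<le> B i j \<and> B i j \<le> c * A i j"
  shows "nonneg_op_matrix B"
proof -
  have summable: "(\<lambda>j. norm (complex_of_real (B i j) * x j)) summable_on R"
    and pointwise: "cmod (mat_op R B x i) \<le> cmod (complex_of_real c * mat_op R A (abs_seq x) i)"
    if x: "x \<in> S" and i: "i \<in> R" for x i
  proof -
    note A_summable = summable_on_cmult_right[OF Re_mat_op_abs_seq(2)[OF A x i], of c]
    have le: "norm (complex_of_real (B i j) * x j) \<le> c * (A i j * cmod (x j))" if "j \<in> R" for j
      using mult_right_mono[OF conjunct2[OF B[OF i that]] norm_ge_zero[of "x j"]] B[OF i that]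
      by (simp add: norm_mult)
    show sm: "(\<lambda>j. norm (complex_of_real (B i j) * x j)) summable_on R"
      by (rule summable_on_comparison_test[OF A_summable le]) simp_all
    have "cmod (mat_op R B x i) \<le> (\<Sum>\<^sub>\<infinity>j\<in>R. norm (complex_of_real (B i j) * x j))"
      using norm_infsum_bound[OF sm] i by (simp add: mat_op_def)
    also have "\<dots> \<le> (\<Sum>\<^sub>\<infinity>j\<in>R. c * (A i j * cmod (x j)))"
      by (rule infsum_mono[OF sm A_summable le])
    also have "\<dots> = c * Re (mat_op R A (abs_seq x) i)"
      using infsum_cmult_right[where c = c, OF Re_mat_op_abs_seq(2)[OF A x i]] Re_mat_op_abs_seq(1)[OF A x i]
      by simp
    also have "\<dots> \<le> c * cmod (mat_op R A (abs_seq x) i)"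
      by (rule mult_left_mono[OF complex_Re_le_cmod \<open>c \<ge> 0\<close>])
    also have "\<dots> = cmod (complex_of_real c * mat_op R A (abs_seq x) i)"
      using \<open>c \<ge> 0\<close> by (simp add: norm_mult)
    finally show "cmod (mat_op R B x i) \<le> cmod (complex_of_real c * mat_op R A (abs_seq x) i)" .
  qed
  have "mat_op R B x \<in> S" if x: "x \<in> S" for x
  proof (rule ideal_mem[OF scale_mem[OF mat_op_mem[OF A abs_seq_mem[OF x]]]])
    show "cmod (mat_op R B x i) \<le> cmod (complex_of_real c * mat_op R A (abs_seq x) i)" for i
      using pointwise[OF x] by (cases "i \<in> R") (auto simp: mat_op_def)
  qed
  then show ?thesis
    using summable B by (auto simp: nonneg_op_matrix_def nonneg_matrix_def defines_operator_def)
qed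

lemma nonneg_op_matrix_hadamard_pow:
  assumes A: "nonneg_op_matrix A" and t: "t \<ge> 1"
  shows "nonneg_op_matrix (hadamard_pow A t)"
proof -
  obtain K where K: "\<And>i j. i \<in> R \<Longrightarrow> j \<in> R \<Longrightarrow> A i j \<le> K"
    using nonneg_op_matrix_entries_bounded[OF A] by blast
  show ?thesis
    unfolding hadamard_pow_def
    using powr_le_powr_minus_one_mult[OF nonneg_op_matrix_nonneg[OF A] K t]
    by (intro nonneg_op_matrix_le_scaled[OF A, of "K powr (t - 1)"]) auto
qed

lemma cmod_mat_op_hadamard_pow_le:
  assumes A: "nonneg_op_matrix A" and t: "t \<ge> 1" and y: "y \<in> S" and z: "z \<in> S" and i: "i \<in> R"
    and y_nonneg: "\<And>k. k \<in> R \<Longrightarrow> 0 \<le> Re (y k)"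
    and z_le: "\<And>k. k \<in> R \<Longrightarrow> cmod (z k) \<le> Re (y k) powr t"
  shows "cmod (mat_op R (hadamard_pow A t) z i) \<le> Re (mat_op R A y i) powr t"
proof -
  have At: "nonneg_op_matrix (hadamard_pow A t)"
    by (rule nonneg_op_matrix_hadamard_pow[OF A t])
  have terms_nonneg: "0 \<le> A i k * Re (y k)" if "k \<in> R" for k
    using nonneg_op_matrix_nonneg[OF A i that] y_nonneg[OF that] by simp
  note Re_y = Re_mat_op[OF A y i]
  have "cmod (mat_op R (hadamard_pow A t) z i) \<le> (\<Sum>\<^sub>\<infinity>k\<in>R. cmod (complex_of_real (A i k powr t) * z k))"
    using norm_infsum_bound[OF mat_op_abs_summable[OF At z i]] i
    by (simp add: mat_op_def hadamard_pow_def)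
  also have "\<dots> \<le> (\<Sum>\<^sub>\<infinity>k\<in>R. (A i k * Re (y k)) powr t)"
  proof (rule infsum_mono)
    show "(\<lambda>k. cmod (complex_of_real (A i k powr t) * z k)) summable_on R"
      using mat_op_abs_summable[OF At z i] by (simp add: hadamard_pow_def)
    show "(\<lambda>k. (A i k * Re (y k)) powr t) summable_on R"
      by (rule infsum_powr_le(1)[OF Re_y(2) terms_nonneg t])
    show "cmod (complex_of_real (A i k powr t) * z k) \<le> (A i k * Re (y k)) powr t" if "k \<in> R" for k
      using mult_left_mono[OF z_le[OF that], of "A i k powr t"]
        nonneg_op_matrix_nonneg[OF A i that] y_nonneg[OF that]
      by (simp add: norm_mult powr_mult)
  qed
  also have "\<dots> \<le> Re (mat_op R A y i) powr t"
    unfolding Re_y(1) by (rule infsum_powr_le(2)[OF Re_y(2) terms_nonneg t])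
  finally show ?thesis .
qed

definition entrywise_powr_dominated :: "real \<Rightarrow> (cseq \<Rightarrow> cseq) \<Rightarrow> (cseq \<Rightarrow> cseq) \<Rightarrow> bool" where
  "entrywise_powr_dominated t B C \<longleftrightarrow> bounded_op B \<and> bounded_op C \<and>
     (\<forall>i\<in>R. \<forall>j\<in>R. 0 \<le> Re (C (unit_vec j) i) \<and> cmod (B (unit_vec j) i) \<le> Re (C (unit_vec j) i) powr t)"

lemma entrywise_powr_dominated_id: "entrywise_powr_dominated t id id"
  by (simp add: entrywise_powr_dominated_def bounded_op_id unit_vec_def)

lemma entrywise_powr_dominated_mat_op_comp:
  assumes dom: "entrywise_powr_dominated t B C" and A: "nonneg_op_matrix A" and t: "t \<ge> 1"
  shows "entrywise_powr_dominated t (mat_op R (hadamard_pow A t) \<circ> B) (mat_op R A \<circ> C)"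
proof -
  have B: "bounded_op B" and C: "bounded_op C"
    and entries: "\<And>i j. i \<in> R \<Longrightarrow> j \<in> R \<Longrightarrow>
      0 \<le> Re (C (unit_vec j) i) \<and> cmod (B (unit_vec j) i) \<le> Re (C (unit_vec j) i) powr t"
    using dom by (simp_all add: entrywise_powr_dominated_def)
  have "0 \<le> Re (mat_op R A (C (unit_vec j)) i)
      \<and> cmod (mat_op R (hadamard_pow A t) (B (unit_vec j)) i) \<le> Re (mat_op R A (C (unit_vec j)) i) powr t"
    if "i \<in> R" "j \<in> R" for i j
    using that entries unit_vec_mem[OF that(2)] bounded_op_mem[OF B] bounded_op_mem[OF C]
    by (intro conjI Re_mat_op_nonneg[OF A] cmod_mat_op_hadamard_pow_le[OF A t]) auto
  then show ?thesis
    unfolding entrywise_powr_dominated_def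
    using bounded_op_comp[OF bounded_op_mat_op[OF nonneg_op_matrix_hadamard_pow[OF A t]] B]
      bounded_op_comp[OF bounded_op_mat_op[OF A] C]
    by simp
qed

lemma entrywise_powr_dominated_prod_op:
  assumes "t \<ge> 1" "\<forall>A\<in>set As. nonneg_op_matrix A"
  shows "entrywise_powr_dominated t (prod_op R (map (\<lambda>A. hadamard_pow A t) As)) (prod_op R As)"
  using assms(2)
proof (induction As)
  case Nil
  show ?case
    unfolding list.map prod_op_Nil by (rule entrywise_powr_dominated_id)
next
  case (Cons A As)
  then have "nonneg_op_matrix A" "\<forall>A\<in>set As. nonneg_op_matrix A"
    by simp_all
  then show ?case
    unfolding list.map prod_op_Cons by (intro entrywise_powr_dominated_mat_op_comp Cons.IH assms(1))
qed

end

section \<open>Order continuous spaces\<close>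

locale oc_class_L_space = class_L_space +
  assumes order_continuous: "order_continuous_seq S nrm"
begin

lemma INF_nrm_seq_tail:
  assumes x: "x \<in> S"
  shows "(INF n. nrm (seq_tail n x)) = 0"
proof -
  define f where "f n = seq_tail n (abs_seq x)" for n
  have f: "f n \<in> S" for n
    unfolding f_def by (rule seq_tail_mem[OF abs_seq_mem[OF x]])
  have nrm_f: "nrm (f n) = nrm (seq_tail n x)" for n
    unfolding f_def by (rule nrm_cong_cmod[OF seq_tail_mem[OF x]]) (simp add: seq_tail_def abs_seq_def)
  have "(INF g\<in>range f. nrm g) = 0"
    using order_continuous unfolding order_continuous_seq_def
  proof (elim allE impE)
    have "\<exists>h\<in>range f. \<forall>i. Re (h i) \<le> Re (g i) \<and> Re (h i) \<le> Re (g' i)"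
      if g: "g \<in> range f" "g' \<in> range f" for g g'
    proof -
      obtain a b where "g = f a" "g' = f b"
        using g by blast
      then show ?thesis
        by (intro bexI[of _ "f (max a b)"] rangeI) (auto simp: f_def seq_tail_def abs_seq_def)
    qed
    moreover have "Re (h i) \<le> 0" if "\<forall>g\<in>range f. \<forall>i. Re (h i) \<le> Re (g i)" for h i
      using that[rule_format, of "f (Suc i)" i] by (simp add: f_def seq_tail_def)
    moreover have "range f \<subseteq> S" "\<forall>g\<in>range f. nonneg_seq g"
      using f by (auto simp: f_def seq_tail_def abs_seq_def nonneg_seq_def)
    ultimately show "range f \<subseteq> S \<and> range f \<noteq> {} \<and> (\<forall>g\<in>range f. nonneg_seq g) \<and>
      (\<forall>g\<in>range f. \<forall>g'\<in>range f. \<exists>h\<in>range f. \<forall>i. Re (h i) \<le> Re (g i) \<and> Re (h i) \<le> Re (g' i)) \<and>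
      (\<forall>h\<in>S. real_seq h \<and> (\<forall>g\<in>range f. \<forall>i. Re (h i) \<le> Re (g i)) \<longrightarrow> (\<forall>i. Re (h i) \<le> 0))"
      by blast
  qed
  then show ?thesis
    using nrm_f by (simp add: image_comp)
qed

lemma nrm_seq_tail_tendsto_0:
  assumes x: "x \<in> S"
  shows "(\<lambda>n. nrm (seq_tail n x)) \<longlonglongrightarrow> 0"
proof -
  have "decseq (\<lambda>n. nrm (seq_tail n x))"
    by (intro decseq_SucI nrm_mono[OF seq_tail_mem[OF x]]) (simp add: seq_tail_def)
  moreover have "bdd_below (range (\<lambda>n. nrm (seq_tail n x)))"
    using nrm_nonneg[OF seq_tail_mem[OF x]] by (intro bdd_belowI[of _ 0]) auto
  ultimately show ?thesis
    using LIMSEQ_decseq_INF INF_nrm_seq_tail[OF x] by metis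
qed

lemma seq_tails_small:
  assumes "finite M" "M \<subseteq> S" "e > 0"
  obtains n where "\<And>m. m \<in> M \<Longrightarrow> nrm (seq_tail n m) \<le> e"
proof -
  have "\<forall>m\<in>M. eventually (\<lambda>n. nrm (seq_tail n m) < e) sequentially"
    using assms(2,3) nrm_seq_tail_tendsto_0 order_tendstoD(2) by blast
  then have "eventually (\<lambda>n. \<forall>m\<in>M. nrm (seq_tail n m) < e) sequentially"
    by (rule eventually_ball_finite[OF assms(1)])
  then obtain N where N: "\<forall>n\<ge>N. \<forall>m\<in>M. nrm (seq_tail n m) < e"
    unfolding eventually_sequentially by blast
  show ?thesis
  proof (rule that)
    fix m assume "m \<in> M"
    then show "nrm (seq_tail N m) \<le> e"
      using N by (simp add: less_imp_le)
  qed
qed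

lemma bounded_op_partial_sums_tendsto:
  assumes T: "bounded_op T" and x: "x \<in> S"
  shows "(\<lambda>n. \<Sum>k\<in>{..<n} \<inter> R. x k * T (unit_vec k) i) \<longlonglongrightarrow> T x i"
proof -
  obtain K where K: "K \<ge> 0" "\<And>x. x \<in> S \<Longrightarrow> nrm (T x) \<le> K * nrm x"
    using bounded_opE[OF T] by blast
  have head: "T (seq_head n x) i = (\<Sum>k\<in>{..<n} \<inter> R. x k * T (unit_vec k) i)" for n
    unfolding seq_head_eq_sum[OF x]
    using bounded_op_sum[OF T, of "{..<n} \<inter> R" "\<lambda>k i. x k * unit_vec k i"]
      bounded_op_scale[OF T unit_vec_mem] scale_mem[OF unit_vec_mem]
    by simp
  have bound: "cmod (T (seq_head n x) i - T x i) \<le> K * nrm (seq_tail n x)" for n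
  proof -
    have "T x = (\<lambda>i. T (seq_head n x) i + T (seq_tail n x) i)"
      using bounded_op_add[OF T seq_head_mem[OF x, of n] seq_tail_mem[OF x, of n]]
      by (simp only: seq_head_plus_tail)
    then have "cmod (T (seq_head n x) i - T x i) = cmod (T (seq_tail n x) i)"
      by (metis add_diff_cancel_left' norm_minus_commute)
    also have "\<dots> \<le> K * nrm (seq_tail n x)"
      using cmod_le_nrm[OF bounded_op_mem[OF T seq_tail_mem[OF x]]] K(2)[OF seq_tail_mem[OF x]]
      by (rule order_trans)
    finally show ?thesis .
  qed
  have "(\<lambda>n. K * nrm (seq_tail n x)) \<longlonglongrightarrow> 0"
    using tendsto_mult_right_zero[OF nrm_seq_tail_tendsto_0[OF x]] by simp
  then have "(\<lambda>n. T (seq_head n x) i - T x i) \<longlonglongrightarrow> 0"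
    by (rule Lim_null_comparison[OF always_eventually, OF allI, OF bound])
  then show ?thesis
    unfolding head[symmetric] by (rule LIM_zero_cancel)
qed

lemma cmod_le_of_entries_le:
  assumes B: "bounded_op B" and C: "bounded_op C" and x: "x \<in> S"
    and entries: "\<And>k. k \<in> R \<Longrightarrow> cmod (B (unit_vec k) i) \<le> \<kappa> * Re (C (unit_vec k) i)"
  shows "cmod (B x i) \<le> \<kappa> * Re (C (abs_seq x) i)"
proof (rule LIMSEQ_le)
  show "(\<lambda>n. cmod (\<Sum>k\<in>{..<n} \<inter> R. x k * B (unit_vec k) i)) \<longlonglongrightarrow> cmod (B x i)"
    by (rule tendsto_norm[OF bounded_op_partial_sums_tendsto[OF B x]])
  show "(\<lambda>n. \<kappa> * Re (\<Sum>k\<in>{..<n} \<inter> R. abs_seq x k * C (unit_vec k) i)) \<longlonglongrightarrow> \<kappa> * Re (C (abs_seq x) i)"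
    by (intro tendsto_mult_left tendsto_Re bounded_op_partial_sums_tendsto[OF C abs_seq_mem[OF x]])
  have "cmod (\<Sum>k\<in>{..<n} \<inter> R. x k * B (unit_vec k) i)
      \<le> \<kappa> * Re (\<Sum>k\<in>{..<n} \<inter> R. abs_seq x k * C (unit_vec k) i)" for n
  proof -
    have "cmod (\<Sum>k\<in>{..<n} \<inter> R. x k * B (unit_vec k) i) \<le> (\<Sum>k\<in>{..<n} \<inter> R. cmod (x k) * cmod (B (unit_vec k) i))"
      using norm_sum[of "\<lambda>k. x k * B (unit_vec k) i"] by (simp add: norm_mult)
    also have "\<dots> \<le> (\<Sum>k\<in>{..<n} \<inter> R. cmod (x k) * (\<kappa> * Re (C (unit_vec k) i)))"
      using entries by (intro sum_mono mult_left_mono) auto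
    also have "\<dots> = \<kappa> * Re (\<Sum>k\<in>{..<n} \<inter> R. abs_seq x k * C (unit_vec k) i)"
      by (simp add: abs_seq_def Re_sum sum_distrib_left algebra_simps)
    finally show ?thesis .
  qed
  then show "\<exists>N. \<forall>n\<ge>N. cmod (\<Sum>k\<in>{..<n} \<inter> R. x k * B (unit_vec k) i)
      \<le> \<kappa> * Re (\<Sum>k\<in>{..<n} \<inter> R. abs_seq x k * C (unit_vec k) i)"
    by blast
qed

lemma nrm_seq_tail_le_if_entries_le:
  assumes B: "bounded_op B" and C: "bounded_op C" and "\<kappa> \<ge> 0" and x: "x \<in> S"
    and entries: "\<And>i k. i \<in> R \<Longrightarrow> n \<le> i \<Longrightarrow> k \<in> R \<Longrightarrow> cmod (B (unit_vec k) i) \<le> \<kappa> * Re (C (unit_vec k) i)"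
  shows "nrm (seq_tail n (B x)) \<le> \<kappa> * nrm (seq_tail n (C (abs_seq x)))"
proof -
  have CxS: "seq_tail n (C (abs_seq x)) \<in> S"
    by (rule seq_tail_mem[OF bounded_op_mem[OF C abs_seq_mem[OF x]]])
  have "cmod (seq_tail n (B x) i) \<le> cmod (complex_of_real \<kappa> * seq_tail n (C (abs_seq x)) i)" for i
  proof (cases "i \<in> R \<and> n \<le> i")
    case True
    then have "cmod (B x i) \<le> \<kappa> * Re (C (abs_seq x) i)"
      using entries by (intro cmod_le_of_entries_le[OF B C x]) auto
    also have "\<dots> \<le> \<kappa> * cmod (C (abs_seq x) i)"
      by (rule mult_left_mono[OF complex_Re_le_cmod \<open>\<kappa> \<ge> 0\<close>])
    finally show ?thesis
      using True \<open>\<kappa> \<ge> 0\<close> by (simp add: seq_tail_def norm_mult)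
  next
    case False
    then show ?thesis
      using vanishes_outside[OF bounded_op_mem[OF B x]] by (auto simp: seq_tail_def)
  qed
  then have "nrm (seq_tail n (B x)) \<le> nrm (\<lambda>i. complex_of_real \<kappa> * seq_tail n (C (abs_seq x)) i)"
    by (rule nrm_mono[OF scale_mem[OF CxS]])
  also have "\<dots> = \<kappa> * nrm (seq_tail n (C (abs_seq x)))"
    using nrm_scale[OF CxS] \<open>\<kappa> \<ge> 0\<close> by simp
  finally show ?thesis .
qed

lemma seq_tails_uniformly_small:
  assumes C: "bounded_op C" and "hmnc S nrm C < \<delta>" "\<epsilon> > 0"
  obtains n where "\<And>x. x \<in> unit_ball S nrm \<Longrightarrow> nrm (seq_tail n (C x)) \<le> \<delta> + \<epsilon>"
proof -
  obtain M where M: "finite M" "M \<subseteq> S"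
    "\<And>x. x \<in> unit_ball S nrm \<Longrightarrow> \<exists>m\<in>M. nrm (\<lambda>i. C x i - m i) \<le> \<delta>"
    using has_finite_net_of_hmnc_less[OF assms(1,2)] unfolding has_finite_net_def by blast
  obtain n where n: "\<And>m. m \<in> M \<Longrightarrow> nrm (seq_tail n m) \<le> \<epsilon>"
    using seq_tails_small[OF M(1,2) \<open>\<epsilon> > 0\<close>] by blast
  have "nrm (seq_tail n (C x)) \<le> \<delta> + \<epsilon>" if x: "x \<in> unit_ball S nrm" for x
  proof -
    obtain m where m: "m \<in> M" "nrm (\<lambda>i. C x i - m i) \<le> \<delta>"
      using M(3)[OF x] by blast
    have CxS: "C x \<in> S" and mS: "m \<in> S"
      using x bounded_op_mem[OF C] m(1) M(2) by (auto simp: unit_ball_def)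
    have "seq_tail n (C x) = (\<lambda>i. seq_tail n (\<lambda>i. C x i - m i) i + seq_tail n m i)"
      by (auto simp: seq_tail_def)
    then have "nrm (seq_tail n (C x)) \<le> nrm (seq_tail n (\<lambda>i. C x i - m i)) + nrm (seq_tail n m)"
      using nrm_triangle[OF seq_tail_mem[OF diff_mem[OF CxS mS]] seq_tail_mem[OF mS]] by simp
    also have "\<dots> \<le> \<delta> + \<epsilon>"
      using nrm_seq_tail_le[OF diff_mem[OF CxS mS], of n] m(2) n[OF m(1)] by linarith
    finally show ?thesis .
  qed
  then show ?thesis
    by (rule that)
qed

lemma hmnc_le_of_seq_tails_le:
  assumes B: "bounded_op B" and tails: "\<And>x. x \<in> unit_ball S nrm \<Longrightarrow> nrm (seq_tail n (B x)) \<le> c"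
  shows "hmnc S nrm B \<le> c"
proof (rule field_le_epsilon)
  fix \<eta> :: real assume "\<eta> > 0"
  have "c \<ge> 0"
    using bounded_op_scale[OF B zero_mem, of 0] zero_mem tails[of "\<lambda>i. 0"]
    by (simp add: unit_ball_def nrm_zero seq_tail_def)
  obtain M where M: "finite M" "M \<subseteq> S"
    "\<And>x. x \<in> unit_ball S nrm \<Longrightarrow> \<exists>m\<in>M. nrm (\<lambda>i. seq_head n (B x) i - m i) \<le> \<eta>"
    using has_finite_net_seq_heads[OF B \<open>\<eta> > 0\<close>, of n] unfolding has_finite_net_def by blast
  have "\<exists>m\<in>M. nrm (\<lambda>i. B x i - m i) \<le> \<eta> + c" if x: "x \<in> unit_ball S nrm" for x
  proof -
    obtain m where m: "m \<in> M" "nrm (\<lambda>i. seq_head n (B x) i - m i) \<le> \<eta>"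
      using M(3)[OF x] by blast
    have BxS: "B x \<in> S"
      using x bounded_op_mem[OF B] by (simp add: unit_ball_def)
    have headS: "(\<lambda>i. seq_head n (B x) i - m i) \<in> S"
      using diff_mem[OF seq_head_mem[OF BxS]] m(1) M(2) by blast
    have "(\<lambda>i. B x i - m i) = (\<lambda>i. (seq_head n (B x) i - m i) + seq_tail n (B x) i)"
      by (auto simp: seq_head_def seq_tail_def)
    then have "nrm (\<lambda>i. B x i - m i) \<le> nrm (\<lambda>i. seq_head n (B x) i - m i) + nrm (seq_tail n (B x))"
      using nrm_triangle[OF headS seq_tail_mem[OF BxS]] by simp
    also have "\<dots> \<le> \<eta> + c"
      using m(2) tails[OF x] by linarith
    finally show ?thesis
      using m(1) by blast
  qed
  then have "has_finite_net (B ` unit_ball S nrm) (\<eta> + c)"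
    unfolding has_finite_net_def using M(1,2) by blast
  then show "hmnc S nrm B \<le> c + \<eta>"
    using hmnc_le_of_net[OF bounded_op_image_subset[OF B]] \<open>\<eta> > 0\<close> \<open>c \<ge> 0\<close> by (simp add: add.commute)
qed

lemma Re_entry_le_if_seq_tails_le:
  assumes C: "bounded_op C" and tails: "\<And>x. x \<in> unit_ball S nrm \<Longrightarrow> nrm (seq_tail n (C x)) \<le> d"
    and "n \<le> i" "k \<in> R"
  shows "Re (C (unit_vec k) i) \<le> d"
proof -
  have "Re (C (unit_vec k) i) \<le> cmod (seq_tail n (C (unit_vec k)) i)"
    using \<open>n \<le> i\<close> complex_Re_le_cmod by (simp add: seq_tail_def)
  also have "\<dots> \<le> nrm (seq_tail n (C (unit_vec k)))"
    by (rule cmod_le_nrm[OF seq_tail_mem[OF bounded_op_mem[OF C unit_vec_mem[OF \<open>k \<in> R\<close>]]]])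
  also have "\<dots> \<le> d"
    using tails unit_vec_mem[OF \<open>k \<in> R\<close>] nrm_unit_vec[OF \<open>k \<in> R\<close>] by (simp add: unit_ball_def)
  finally show ?thesis .
qed

lemma hmnc_le_powr_if_gt:
  assumes dom: "entrywise_powr_dominated t B C" and t: "t \<ge> 1" and d: "d > hmnc S nrm C"
  shows "hmnc S nrm B \<le> d powr t"
proof -
  have B: "bounded_op B" and C: "bounded_op C"
    and C_nonneg: "\<And>i k. i \<in> R \<Longrightarrow> k \<in> R \<Longrightarrow> 0 \<le> Re (C (unit_vec k) i)"
    and B_le: "\<And>i k. i \<in> R \<Longrightarrow> k \<in> R \<Longrightarrow> cmod (B (unit_vec k) i) \<le> Re (C (unit_vec k) i) powr t"
    using dom by (simp_all add: entrywise_powr_dominated_def)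
  let ?g = "hmnc S nrm C"
  obtain n where "\<And>x. x \<in> unit_ball S nrm \<Longrightarrow> nrm (seq_tail n (C x)) \<le> (?g + d) / 2 + (d - ?g) / 2"
    by (rule seq_tails_uniformly_small[OF C, of "(?g + d) / 2" "(d - ?g) / 2"]) (use d in auto)
  then have n: "\<And>x. x \<in> unit_ball S nrm \<Longrightarrow> nrm (seq_tail n (C x)) \<le> d"
    by (simp add: field_simps)
  define \<kappa> where "\<kappa> = d powr (t - 1)"
  have "\<kappa> \<ge> 0"
    by (simp add: \<kappa>_def)
  \<comment> \<open>From row n on the entries of C are at most d, so their t-th powers are at most \<kappa> times them.\<close>
  have entries: "cmod (B (unit_vec k) i) \<le> \<kappa> * Re (C (unit_vec k) i)"
    if i: "i \<in> R" "n \<le> i" and k: "k \<in> R" for i k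
    unfolding \<kappa>_def
    using B_le[OF i(1) k] Re_entry_le_if_seq_tails_le[OF C n i(2) k]
      powr_le_powr_minus_one_mult[OF C_nonneg[OF i(1) k] _ t]
    by fastforce
  have "nrm (seq_tail n (B x)) \<le> d powr t" if x: "x \<in> unit_ball S nrm" for x
  proof -
    have xS: "x \<in> S" and absx: "abs_seq x \<in> unit_ball S nrm"
      using x abs_seq_mem nrm_abs_seq by (auto simp: unit_ball_def)
    have "nrm (seq_tail n (B x)) \<le> \<kappa> * nrm (seq_tail n (C (abs_seq x)))"
      by (rule nrm_seq_tail_le_if_entries_le[OF B C \<open>\<kappa> \<ge> 0\<close> xS entries])
    also have "\<dots> \<le> \<kappa> * d"
      by (rule mult_left_mono[OF n[OF absx] \<open>\<kappa> \<ge> 0\<close>])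
    also have "\<dots> = d powr t"
      using d hmnc_nonneg[OF C] powr_add[of d "t - 1" 1] by (simp add: \<kappa>_def)
    finally show ?thesis .
  qed
  then show ?thesis
    by (rule hmnc_le_of_seq_tails_le[OF B])
qed

lemma hmnc_le_powr_if_entrywise_powr_dominated:
  assumes dom: "entrywise_powr_dominated t B C" and t: "t \<ge> 1"
  shows "hmnc S nrm B \<le> hmnc S nrm C powr t"
proof (rule le_powr_if_forall_gt)
  show "hmnc S nrm C \<ge> 0"
    using dom hmnc_nonneg by (simp add: entrywise_powr_dominated_def)
qed (use t hmnc_le_powr_if_gt[OF dom t] in auto)

lemma hmnc_prod_op_hadamard_pow_le:
  assumes "t \<ge> 1" "\<forall>A\<in>set As. nonneg_op_matrix A"
  shows "hmnc S nrm (prod_op R (map (\<lambda>A. hadamard_pow A t) As)) \<le> hmnc S nrm (prod_op R As) powr t"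
  by (rule hmnc_le_powr_if_entrywise_powr_dominated[OF entrywise_powr_dominated_prod_op[OF assms] assms(1)])

lemma ess_spec_rad_prod_op_hadamard_pow_le:
  assumes t: "t \<ge> 1" and As: "\<forall>A\<in>set As. nonneg_op_matrix A"
  shows "ess_spec_rad S nrm (prod_op R (map (\<lambda>A. hadamard_pow A t) As))
    \<le> ess_spec_rad S nrm (prod_op R As) powr t"
proof (rule ess_spec_rad_le_powr)
  show "bounded_op (prod_op R (map (\<lambda>A. hadamard_pow A t) As))" "bounded_op (prod_op R As)"
    using entrywise_powr_dominated_prod_op[OF assms] by (simp_all add: entrywise_powr_dominated_def)
  show "hmnc S nrm (prod_op R (map (\<lambda>A. hadamard_pow A t) As) ^^ j) \<le> hmnc S nrm (prod_op R As ^^ j) powr t" for j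
    using hmnc_prod_op_hadamard_pow_le[OF t, of "concat (replicate j As)"] As
    by (simp add: prod_op_funpow map_concat)
qed (use t in simp)

end

theorem theorem3p2:
  fixes R :: "nat set" and S :: "(nat \<Rightarrow> complex) set" and nrm :: "(nat \<Rightarrow> complex) \<Rightarrow> real"
    and t :: real and A :: "nat \<Rightarrow> nat \<Rightarrow> real" and As :: "(nat \<Rightarrow> nat \<Rightarrow> real) list"
  assumes L: "in_class_L R S nrm"
    and ocL: "order_continuous_seq S nrm"
    and ocD: "order_continuous_dual S nrm"
    and t: "t \<ge> 1"
    and A: "nonneg_matrix R A" "defines_operator R S A"
    and As: "As \<noteq> []" "\<forall>B\<in>set As. nonneg_matrix R B \<and> defines_operator R S B"
  shows "hmnc S nrm (mat_op R (hadamard_pow A t)) \<le> hmnc S nrm (mat_op R A) powr t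
       \<and> ess_spec_rad S nrm (mat_op R (hadamard_pow A t)) \<le> ess_spec_rad S nrm (mat_op R A) powr t
       \<and> hmnc S nrm (prod_op R (map (\<lambda>B. hadamard_pow B t) As)) \<le> hmnc S nrm (prod_op R As) powr t
       \<and> ess_spec_rad S nrm (prod_op R (map (\<lambda>B. hadamard_pow B t) As))
           \<le> ess_spec_rad S nrm (prod_op R As) powr t"
proof -
  interpret oc_class_L_space R S nrm
    using L ocL by unfold_locales
  have single: "\<forall>B\<in>set [A]. nonneg_op_matrix B" and list: "\<forall>B\<in>set As. nonneg_op_matrix B"
    using A As(2) by (simp_all add: nonneg_op_matrix_def)
  have "prod_op R [A] = mat_op R A" "prod_op R (map (\<lambda>B. hadamard_pow B t) [A]) = mat_op R (hadamard_pow A t)"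
    by (simp_all add: prod_op_Cons prod_op_Nil)
  then show ?thesis
    using hmnc_prod_op_hadamard_pow_le[OF t single] ess_spec_rad_prod_op_hadamard_pow_le[OF t single]
      hmnc_prod_op_hadamard_pow_le[OF t list] ess_spec_rad_prod_op_hadamard_pow_le[OF t list]
    by simp
qed

end
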